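(* Let $G$ be a graph with $N$ vertices and maximum degree $\Delta$. Let $Q^\dagger=\sum_i Q_i^\dagger$ (sum over all vertices $i$) with $Q_i^\dagger=\prod_{j\in I_i}s_j^\dagger$, where the index sets $I_i$ satisfy: (1) $|I_i|=c$ for a constant $c>1$; (2) $|\mathbf r_j-\mathbf r_i|\le d$ for all $j\in I_i$, for a constant $d$; (3) $I_{i_1}\ne I_{i_2}$ whenever $i_1\ne i_2$. Then there exists a $\delta$-locality-preserving map $M$ with $\delta\le 8d(\Delta^{4d}+1)$ such that $M|W\rangle=N^{-1/2}Q^\dagger|\overline 0\rangle$ and $M|\overline 0\rangle=|\overline 0\rangle$. Consequently, if $G$ is connected, then for every positive integer $R$ with $N>\Delta^{4(R+8d(\Delta^{4d}+1))}+1$, every operator $H$ of range at most $R$ with $H|\overline 0\rangle\propto|\overline 0\rangle$ and $HQ^\dagger|\overline 0\rangle\propto Q^\dagger|\overline 0\rangle$ can be written as $H=\Omega I+\omega\sum_i s_i^\dagger s_i+\sum_{X}h_X$, with constants $\Omega,\omega$ and operators $h_X$ supported in vertex sets $X$ with $\mathrm{diam}(X)\le 2R+24d(\Delta^{4d}+1)$, satisfying $h_XQ^\dagger|\overline 0\rangle=h_X|\overline 0\rangle=0$.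
   Context: Qubits on the vertices of $G$ with local basis $|0\rangle,|1\rangle$; $s_i^\dagger$ acts on vertex $i$ as $s^\dagger|0\rangle=|1\rangle$, $s^\dagger|1\rangle=0$, $s_i=(s_i^\dagger)^\dagger$; $|\overline 0\rangle=|0\rangle^{\otimes N}$; $|W\rangle=N^{-1/2}\sum_i s_i^\dagger|\overline 0\rangle$. Distances $|\mathbf r_i-\mathbf r_j|$ are graph distances; for a vertex set $X$, $\mathrm{diam}(X)=1+\max_{i,j\in X}(\text{distance})$; an operator is supported in $X$ if it acts as identity outside $X$. Every operator has a unique expansion in normal-ordered strings $s^\dagger_{j_1}\cdots s^\dagger_{j_n}s_{k_1}\cdots s_{k_m}$ (the $j$'s pairwise distinct, the $k$'s pairwise distinct); a string has range $R$ where $R$ is the smallest positive integer with all pairwise distances between its sites $<R$; an operator has range at most $R$ if all its strings with nonzero coefficient do. Operators need not be Hermitian. A linear map $M$ is $\delta$-locality-preserving if it is invertible and for every operator $O$ of range at most $R$ (any $R$), both $MOM^{-1}$ and $M^{-1}OM$ have range at most $R+\delta$. *)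

theory Defs
  imports Complex_Main "HOL-Library.Extended_Nat"
begin

text \<open>A computational basis state is identified with the set of vertices in state 1.
  Operators are matrices indexed by basis states: Op x y is the entry between x and y.\<close>

type_synonym 'v state = "'v set \<Rightarrow> complex"
type_synonym 'v qop = "'v set \<Rightarrow> 'v set \<Rightarrow> complex"

definition simple_graph :: "('v \<Rightarrow> 'v \<Rightarrow> bool) \<Rightarrow> bool" where
  "simple_graph E \<longleftrightarrow> (\<forall>a b. E a b \<longrightarrow> E b a) \<and> (\<forall>a. \<not> E a a)"

definition max_degree :: "('v::finite \<Rightarrow> 'v \<Rightarrow> bool) \<Rightarrow> nat" where
  "max_degree E = Max (range (\<lambda>v. card {u. E v u}))"

definition gdist :: "('v \<Rightarrow> 'v \<Rightarrow> bool) \<Rightarrow> 'v \<Rightarrow> 'v \<Rightarrow> enat" where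
  "gdist E a b = (if \<exists>n. (E ^^ n) a b then enat (LEAST n. (E ^^ n) a b) else \<infinity>)"

definition graph_connected :: "('v \<Rightarrow> 'v \<Rightarrow> bool) \<Rightarrow> bool" where
  "graph_connected E \<longleftrightarrow> (\<forall>a b. gdist E a b \<noteq> \<infinity>)"

definition diam :: "('v \<Rightarrow> 'v \<Rightarrow> bool) \<Rightarrow> 'v set \<Rightarrow> enat" where
  "diam E X = 1 + Max {gdist E i j | i j. i \<in> X \<and> j \<in> X}"

definition app :: "'v::finite qop \<Rightarrow> 'v state \<Rightarrow> 'v state" where
  "app Op \<psi> = (\<lambda>x. \<Sum>y\<in>UNIV. Op x y * \<psi> y)"

definition mmul :: "'v::finite qop \<Rightarrow> 'v qop \<Rightarrow> 'v qop" where
  "mmul A B = (\<lambda>x y. \<Sum>z\<in>UNIV. A x z * B z y)"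

definition idop :: "'v qop" where
  "idop = (\<lambda>x y. if x = y then 1 else 0)"

text \<open>Normal-ordered string  s^dagger_J s_K  (product over the distinct sites in J, resp. K).\<close>
definition nstr :: "'v set \<Rightarrow> 'v set \<Rightarrow> 'v qop" where
  "nstr J K = (\<lambda>x y. if K \<subseteq> y \<and> J \<inter> (y - K) = {} \<and> x = (y - K) \<union> J then 1 else 0)"

definition sdag :: "'v \<Rightarrow> 'v qop" where "sdag i = nstr {i} {}"
definition sann :: "'v \<Rightarrow> 'v qop" where "sann i = nstr {} {i}"

definition vac :: "'v state" where "vac = (\<lambda>x. if x = {} then 1 else 0)"

definition Wstate :: "'v::finite state" where
  "Wstate = (\<lambda>x. complex_of_real (1 / sqrt (real (card (UNIV :: 'v set)))) * (\<Sum>i\<in>UNIV. app (sdag i) vac x))"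

definition string_range_le :: "('v \<Rightarrow> 'v \<Rightarrow> bool) \<Rightarrow> 'v set \<Rightarrow> 'v set \<Rightarrow> nat \<Rightarrow> bool" where
  "string_range_le E J K R \<longleftrightarrow> 0 < R \<and> (\<forall>a\<in>J \<union> K. \<forall>b\<in>J \<union> K. gdist E a b < enat R)"

definition range_le :: "('v::finite \<Rightarrow> 'v \<Rightarrow> bool) \<Rightarrow> 'v qop \<Rightarrow> nat \<Rightarrow> bool" where
  "range_le E Op R \<longleftrightarrow> (\<exists>c :: 'v set \<Rightarrow> 'v set \<Rightarrow> complex.
      Op = (\<lambda>x y. \<Sum>J\<in>UNIV. \<Sum>K\<in>UNIV. c J K * nstr J K x y) \<and>
      (\<forall>J K. c J K \<noteq> 0 \<longrightarrow> string_range_le E J K R))"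

definition inverse_ops :: "'v::finite qop \<Rightarrow> 'v qop \<Rightarrow> bool" where
  "inverse_ops M Mi \<longleftrightarrow> mmul M Mi = idop \<and> mmul Mi M = idop"

definition loc_preserving :: "('v::finite \<Rightarrow> 'v \<Rightarrow> bool) \<Rightarrow> nat \<Rightarrow> 'v qop \<Rightarrow> bool" where
  "loc_preserving E \<delta> M \<longleftrightarrow> (\<exists>Mi. inverse_ops M Mi \<and>
     (\<forall>Op R. 0 < R \<longrightarrow> range_le E Op R \<longrightarrow>
        range_le E (mmul (mmul M Op) Mi) (R + \<delta>) \<and> range_le E (mmul (mmul Mi Op) M) (R + \<delta>)))"

definition supported_in :: "'v qop \<Rightarrow> 'v set \<Rightarrow> bool" where
  "supported_in Op X \<longleftrightarrow> (\<exists>A. \<forall>x y. Op x y = (if x - X = y - X then A (x \<inter> X) (y \<inter> X) else 0))"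

definition proportional :: "'v state \<Rightarrow> 'v state \<Rightarrow> bool" where
  "proportional \<phi> \<psi> \<longleftrightarrow> (\<exists>a::complex. \<phi> = (\<lambda>x. a * \<psi> x))"

end

(* Identify basis states with the sets of excited vertices, so that Q^dagger|0> is the sum of
   the configurations I i. Colour the vertices with Delta^(4d) + 1 colours so that vertices at
   distance at most 4d get different colours. Within one colour class the 2d-balls around the
   vertices are disjoint, and exchanging the configurations {i} and I i inside each ball is a
   permutation of the basis whose conjugation spreads supports by at most 8d. The composition M of
   these permutations over all colour classes fixes the vacuum and sends every single excitation
   {i} to I i, hence W to Q^dagger|0>/sqrt N.
   For the decomposition, subtract from H the multiples of the identity and of the number operator
   determined by its eigenvalues on |0> and Q^dagger|0> (the number operator acts on the latter as
   c). The remainder kills both states and is split into local terms that kill both states. *)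

theory Submission
  imports Defs
begin

section \<open>Graph distances\<close>

definition near :: "('v \<Rightarrow> 'v \<Rightarrow> bool) \<Rightarrow> nat \<Rightarrow> 'v \<Rightarrow> 'v \<Rightarrow> bool" where
  "near E n a b \<longleftrightarrow> (\<exists>m\<le>n. (E ^^ m) a b)"

definition pairwise_near :: "('v \<Rightarrow> 'v \<Rightarrow> bool) \<Rightarrow> nat \<Rightarrow> 'v set \<Rightarrow> bool" where
  "pairwise_near E n Z \<longleftrightarrow> (\<forall>a\<in>Z. \<forall>b\<in>Z. near E n a b)"

lemma gdist_le_iff_near: "gdist E a b \<le> enat n \<longleftrightarrow> near E n a b"
proof
  assume le: "gdist E a b \<le> enat n"
  then have ex: "\<exists>m. (E ^^ m) a b" unfolding gdist_def by (auto split: if_splits)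
  then have "(LEAST m. (E ^^ m) a b) \<le> n" using le unfolding gdist_def by simp
  then show "near E n a b" unfolding near_def using LeastI_ex[OF ex] by auto
next
  assume "near E n a b"
  then obtain m where "m \<le> n" "(E ^^ m) a b" unfolding near_def by auto
  moreover from this have "(LEAST m. (E ^^ m) a b) \<le> m" by (meson Least_le)
  ultimately show "gdist E a b \<le> enat n" unfolding gdist_def by auto
qed

lemma gdist_less_iff_near:
  assumes "0 < R"
  shows "gdist E a b < enat R \<longleftrightarrow> near E (R - 1) a b"
proof -
  have "gdist E a b < enat R \<longleftrightarrow> gdist E a b \<le> enat (R - 1)"
    using assms by (cases "gdist E a b") auto
  then show ?thesis by (simp only: gdist_le_iff_near)
qed

lemma near_refl: "near E n a a"
  unfolding near_def by auto

lemma near_mono: "near E n a b \<Longrightarrow> n \<le> m \<Longrightarrow> near E m a b"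
  unfolding near_def by (meson order_trans)

lemma near_trans: "near E n a b \<Longrightarrow> near E m b c \<Longrightarrow> near E (n + m) a c"
  unfolding near_def by (meson add_mono relpowp_trans)

lemma near_edge: "E a b \<Longrightarrow> near E 1 a b"
  unfolding near_def by (intro exI[of _ 1]) auto

lemma relpowp_sym:
  assumes sym: "\<And>a b. E a b \<Longrightarrow> E b a"
  shows "(E ^^ n) a b \<Longrightarrow> (E ^^ n) b a"
proof (induction n arbitrary: a b)
  case (Suc n)
  from Suc.prems obtain y where "(E ^^ n) a y" "E y b" by (rule relpowp_Suc_E)
  then have "E b y" "(E ^^ n) y a" using sym Suc.IH by blast+
  then show ?case by (rule relpowp_Suc_I2)
qed simp

lemma near_sym:
  assumes "simple_graph E" "near E n a b"
  shows "near E n b a"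
proof -
  obtain m where m: "m \<le> n" "(E ^^ m) a b" using assms(2) unfolding near_def by blast
  have "E x y \<Longrightarrow> E y x" for x y using assms(1) unfolding simple_graph_def by blast
  then have "(E ^^ m) b a" using m(2) by (rule relpowp_sym)
  then show ?thesis using m(1) unfolding near_def by blast
qed

lemma near_via:
  assumes "simple_graph E" "near E n a c" "near E m b c"
  shows "near E (n + m) a b"
  using near_trans[OF assms(2) near_sym[OF assms(1,3)]] .

lemma pairwise_near_mono: "pairwise_near E n Z \<Longrightarrow> n \<le> m \<Longrightarrow> pairwise_near E m Z"
  unfolding pairwise_near_def by (meson near_mono)

lemma diam_le_if_pairwise_near:
  fixes E :: "'v::finite \<Rightarrow> 'v \<Rightarrow> bool"
  assumes "X \<noteq> {}" "pairwise_near E n X"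
  shows "diam E X \<le> enat (n + 1)"
proof -
  let ?S = "{gdist E i j | i j. i \<in> X \<and> j \<in> X}"
  have "?S \<subseteq> range (\<lambda>(i, j). gdist E i j)" by auto
  then have "finite ?S" by (rule finite_subset) simp
  moreover have "?S \<noteq> {}" using assms(1) by auto
  ultimately have "Max ?S \<le> enat n"
    using assms(2) by (auto simp: Max_le_iff gdist_le_iff_near pairwise_near_def)
  then have "1 + Max ?S \<le> enat (n + 1)"
    using add_left_mono[of "Max ?S" "enat n" 1] by (simp add: one_enat_def)
  then show ?thesis by (simp only: diam_def)
qed

text \<open>For m > 0 the centre a lies in the m-ball around each of its neighbours u, where it takes
  the place of u in the count.\<close>

lemma card_punctured_ball_le:
  fixes E :: "'v::finite \<Rightarrow> 'v \<Rightarrow> bool"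
  assumes graph: "simple_graph E"
  shows "card {b. b \<noteq> a \<and> near E m a b} \<le> max_degree E ^ m"
proof (induction m arbitrary: a)
  case 0
  have "{b. b \<noteq> a \<and> near E 0 a b} = {}" by (auto simp: near_def)
  then show ?case by (metis card.empty zero_le)
next
  case (Suc m)
  have deg: "card {u. E a u} \<le> max_degree E"
    unfolding max_degree_def by (rule Max_ge) auto
  define S where "S u = {b. near E m u b} - {a}" for u
  have sub: "{b. b \<noteq> a \<and> near E (Suc m) a b} \<subseteq> (\<Union>u\<in>{u. E a u}. S u)"
  proof
    fix b assume "b \<in> {b. b \<noteq> a \<and> near E (Suc m) a b}"
    then obtain k where k: "k \<le> Suc m" "(E ^^ k) a b" "b \<noteq> a" unfolding near_def by auto
    then obtain k' where k': "k = Suc k'" by (cases k) auto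
    then obtain u where "E a u" "(E ^^ k') u b" using k(2) relpowp_Suc_D2 by metis
    then show "b \<in> (\<Union>u\<in>{u. E a u}. S u)" using k k' unfolding S_def near_def by auto
  qed
  have each: "card (S u) \<le> max_degree E ^ m" if "E a u" for u
  proof (cases "m = 0")
    case True
    then have "S u \<subseteq> {u}" unfolding S_def near_def by auto
    then have "card (S u) \<le> 1" using card_mono[of "{u}" "S u"] by simp
    then show ?thesis using True by simp
  next
    case False
    have "near E 1 u a" using near_edge near_sym[OF graph] that by metis
    then have "a \<in> {b. near E m u b}" using False near_mono by fastforce
    moreover have "u \<in> {b. near E m u b}" by (simp add: near_refl)
    ultimately have "card (S u) = card ({b. near E m u b} - {u})"
      unfolding S_def by (simp add: card_Diff_singleton)
    also have "{b. near E m u b} - {u} = {b. b \<noteq> u \<and> near E m u b}" by blast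
    finally show ?thesis using Suc.IH by simp
  qed
  have "card {b. b \<noteq> a \<and> near E (Suc m) a b} \<le> card (\<Union>u\<in>{u. E a u}. S u)"
    by (rule card_mono[OF _ sub]) simp
  also have "\<dots> \<le> (\<Sum>u\<in>{u. E a u}. card (S u))" by (rule card_UN_le) simp
  also have "\<dots> \<le> card {u. E a u} * max_degree E ^ m"
    using sum_mono[of "{u. E a u}" "\<lambda>u. card (S u)" "\<lambda>_. max_degree E ^ m"] each by simp
  also have "\<dots> \<le> max_degree E ^ Suc m" using deg by simp
  finally show ?case .
qed

lemma pairwise_near_Un:
  assumes E: "simple_graph E" and "pairwise_near E n A" "pairwise_near E m B" "p \<in> A" "p \<in> B"
  shows "pairwise_near E (n + m) (A \<union> B)"
  unfolding pairwise_near_def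
proof (intro ballI)
  fix a b assume "a \<in> A \<union> B" "b \<in> A \<union> B"
  then consider "a \<in> A" "b \<in> A" | "a \<in> B" "b \<in> B" | "a \<in> A" "b \<in> B" | "a \<in> B" "b \<in> A"
    by blast
  then show "near E (n + m) a b"
  proof cases
    case 1
    then have "near E n a b" using assms(2) unfolding pairwise_near_def by blast
    then show ?thesis by (rule near_mono) simp
  next
    case 2
    then have "near E m a b" using assms(3) unfolding pairwise_near_def by blast
    then show ?thesis by (rule near_mono) simp
  next
    case 3
    then have "near E n a p" "near E m b p" using assms(2-5) unfolding pairwise_near_def by blast+
    then show ?thesis by (rule near_via[OF E])
  next
    case 4
    then have "near E m a p" "near E n b p" using assms(2-5) unfolding pairwise_near_def by blast+
    then have "near E (m + n) a b" by (rule near_via[OF E])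
    then show ?thesis by (simp add: add.commute)
  qed
qed

lemma pairwise_near_centre:
  assumes "simple_graph E" "\<And>a. a \<in> X \<Longrightarrow> near E n a p"
  shows "pairwise_near E (n + n) X"
  unfolding pairwise_near_def
proof (intro ballI)
  fix a b assume "a \<in> X" "b \<in> X"
  then show "near E (n + n) a b" by (intro near_via[OF assms(1) assms(2) assms(2)])
qed

lemma pairwise_near_thicken:
  assumes "simple_graph E" "\<And>a. a \<in> Z' \<Longrightarrow> \<exists>z\<in>Z. near E m a z" "pairwise_near E n Z"
  shows "pairwise_near E (m + n + m) Z'"
  unfolding pairwise_near_def
proof (intro ballI)
  fix a b assume "a \<in> Z'" "b \<in> Z'"
  then obtain za zb where z: "za \<in> Z" "zb \<in> Z" "near E m a za" "near E m b zb"
    using assms(2) by blast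
  have "near E n za zb" using z(1,2) assms(3) unfolding pairwise_near_def by blast
  from near_trans[OF near_trans[OF z(3) this] near_sym[OF assms(1) z(4)]]
  show "near E (m + n + m) a b" .
qed

lemma exists_free_colour:
  fixes col :: "'v \<Rightarrow> nat"
  assumes "finite S" "card S \<le> k"
  shows "\<exists>j\<le>k. j \<notin> col ` S"
proof (rule ccontr)
  assume "\<not> (\<exists>j\<le>k. j \<notin> col ` S)"
  then have "{0..k} \<subseteq> col ` S" by auto
  moreover have "finite (col ` S)" using assms(1) by simp
  ultimately have "card {0..k} \<le> card (col ` S)" by (rule card_mono[rotated])
  also have "\<dots> \<le> card S" using assms(1) by (rule card_image_le)
  finally show False using assms(2) by simp
qed

lemma greedy_coloring:
  fixes C :: "'v::finite \<Rightarrow> 'v \<Rightarrow> bool"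
  assumes sym: "\<And>a b. C a b \<Longrightarrow> C b a" and deg: "\<And>a. card {b. b \<noteq> a \<and> C a b} \<le> k"
  obtains col where "\<And>v. col v \<le> k" "\<And>a b. a \<noteq> b \<Longrightarrow> C a b \<Longrightarrow> col a \<noteq> col b"
proof -
  have "\<exists>col. (\<forall>v. col v \<le> k) \<and> (\<forall>a\<in>A. \<forall>b\<in>A. a \<noteq> b \<and> C a b \<longrightarrow> col a \<noteq> col b)"
    if "finite A" for A :: "'v set"
    using that
  proof (induction A rule: finite_induct)
    case empty
    show ?case by (intro exI[of _ "\<lambda>_. 0"]) simp
  next
    case (insert x A)
    then obtain col where col: "\<forall>v. col v \<le> k" "\<forall>a\<in>A. \<forall>b\<in>A. a \<noteq> b \<and> C a b \<longrightarrow> col a \<noteq> col b"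
      by blast
    obtain j where j: "j \<le> k" "j \<notin> col ` {b. b \<noteq> x \<and> C x b}"
      using exists_free_colour[OF finite_subset[OF subset_UNIV finite_UNIV] deg[of x]] by blast
    have new: "(col(x := j)) b \<noteq> j" if "b \<noteq> x" "C x b" for b
      using that j(2) by force
    have "(col(x := j)) a \<noteq> (col(x := j)) b"
      if ab: "a \<in> insert x A" "b \<in> insert x A" "a \<noteq> b" "C a b" for a b
    proof -
      consider "a = x" | "b = x" | "a \<in> A" "b \<in> A" "a \<noteq> x" "b \<noteq> x" using ab by blast
      then show ?thesis
      proof cases
        case 1 then show ?thesis using new[of b] ab by simp
      next
        case 2 then show ?thesis using new[of a] ab sym by fastforce
      next
        case 3 then show ?thesis using col(2) ab by simp
      qed
    qed
    moreover have "(col(x := j)) v \<le> k" for v using col(1) j(1) by simp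
    ultimately show ?case by (intro exI[of _ "col(x := j)"]) blast
  qed
  from this[OF finite_UNIV] obtain col
    where "\<forall>v. col v \<le> k" "\<forall>a\<in>UNIV. \<forall>b\<in>UNIV. a \<noteq> b \<and> C a b \<longrightarrow> col a \<noteq> col b"
    by blast
  then show ?thesis using that by blast
qed

section \<open>Supports and normal-ordered expansions\<close>

lemma supported_in_iff:
  "supported_in Op X \<longleftrightarrow> (\<forall>x y. Op x y = (if x - X = y - X then Op (x \<inter> X) (y \<inter> X) else 0))"
proof
  assume "supported_in Op X"
  then obtain A where A: "\<And>x y. Op x y = (if x - X = y - X then A (x \<inter> X) (y \<inter> X) else 0)"
    unfolding supported_in_def by blast
  show "\<forall>x y. Op x y = (if x - X = y - X then Op (x \<inter> X) (y \<inter> X) else 0)"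
  proof (intro allI)
    fix x y
    have "Op (x \<inter> X) (y \<inter> X) = A (x \<inter> X) (y \<inter> X)"
      using A[of "x \<inter> X" "y \<inter> X"] by (simp add: Int_assoc Diff_eq)
    then show "Op x y = (if x - X = y - X then Op (x \<inter> X) (y \<inter> X) else 0)"
      using A[of x y] by simp
  qed
next
  assume "\<forall>x y. Op x y = (if x - X = y - X then Op (x \<inter> X) (y \<inter> X) else 0)"
  then show "supported_in Op X" unfolding supported_in_def by blast
qed

lemma supported_in_mono:
  assumes "supported_in Op X" "X \<subseteq> Y"
  shows "supported_in Op Y"
  unfolding supported_in_iff
proof (intro allI)
  fix x y
  have Op: "\<And>x y. Op x y = (if x - X = y - X then Op (x \<inter> X) (y \<inter> X) else 0)"
    using assms(1) supported_in_iff by metis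
  show "Op x y = (if x - Y = y - Y then Op (x \<inter> Y) (y \<inter> Y) else 0)"
  proof (cases "x - Y = y - Y")
    case True
    have "x \<inter> Y \<inter> X = x \<inter> X" "y \<inter> Y \<inter> X = y \<inter> X" using assms(2) by auto
    moreover have "x \<inter> Y - X = y \<inter> Y - X \<longleftrightarrow> x - X = y - X" using True by blast
    ultimately show ?thesis using Op[of x y] Op[of "x \<inter> Y" "y \<inter> Y"] True by simp
  next
    case False
    then have "x - X \<noteq> y - X" using assms(2) by blast
    then show ?thesis using Op[of x y] False by simp
  qed
qed

lemma supported_in_zero: "supported_in (\<lambda>x y. 0) X"
  unfolding supported_in_iff by simp

lemma supported_in_add:
  "supported_in A X \<Longrightarrow> supported_in B X \<Longrightarrow> supported_in (\<lambda>x y. A x y + B x y) X"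
  unfolding supported_in_iff by (metis add.right_neutral)

lemma supported_in_scale: "supported_in A X \<Longrightarrow> supported_in (\<lambda>x y. a * A x y) X"
  unfolding supported_in_iff by (metis mult_zero_right)

lemma supported_in_diff:
  "supported_in A X \<Longrightarrow> supported_in B X \<Longrightarrow> supported_in (\<lambda>x y. A x y - B x y) X"
  unfolding supported_in_iff by (metis diff_zero)

lemma supported_in_sum:
  "finite S \<Longrightarrow> (\<And>s. s \<in> S \<Longrightarrow> supported_in (A s) X) \<Longrightarrow> supported_in (\<lambda>x y. \<Sum>s\<in>S. A s x y) X"
  by (induction S rule: finite_induct) (simp_all add: supported_in_zero supported_in_add)

lemma supported_in_nstr: "supported_in (nstr J K) (J \<union> K)"
  unfolding supported_in_iff nstr_def by (intro allI) (auto; blast)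

text \<open>The operator |b><a| on the sites of Z, tensored with the identity outside Z.\<close>

definition local_transition :: "'v set \<Rightarrow> 'v set \<Rightarrow> 'v set \<Rightarrow> 'v qop" where
  "local_transition Z a b = (\<lambda>x y. if y \<inter> Z = a \<and> x = (y - Z) \<union> b then 1 else 0)"

lemma supported_in_local_transition: "b \<subseteq> Z \<Longrightarrow> supported_in (local_transition Z a b) Z"
  unfolding supported_in_iff local_transition_def by (intro allI) (auto; blast)

definition expandable :: "('v set \<Rightarrow> 'v set \<Rightarrow> bool) \<Rightarrow> 'v::finite qop \<Rightarrow> bool" where
  "expandable P Op \<longleftrightarrow> (\<exists>e. Op = (\<lambda>x y. \<Sum>J\<in>UNIV. \<Sum>K\<in>UNIV. e J K * nstr J K x y) \<and>
      (\<forall>J K. e J K \<noteq> 0 \<longrightarrow> P J K))"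

lemma range_le_iff_expandable:
  "range_le E Op R \<longleftrightarrow> expandable (\<lambda>J K. string_range_le E J K R) Op"
  unfolding range_le_def expandable_def ..

lemma expandable_mono: "expandable P Op \<Longrightarrow> (\<And>J K. P J K \<Longrightarrow> Q J K) \<Longrightarrow> expandable Q Op"
  unfolding expandable_def by blast

lemma expandable_zero: "expandable P (\<lambda>x y. 0)"
  unfolding expandable_def by (intro exI[of _ "\<lambda>J K. 0"]) simp

lemma expandable_add:
  assumes "expandable P A" "expandable P B"
  shows "expandable P (\<lambda>x y. A x y + B x y)"
proof -
  obtain a where a: "A = (\<lambda>x y. \<Sum>J\<in>UNIV. \<Sum>K\<in>UNIV. a J K * nstr J K x y)"
    "\<forall>J K. a J K \<noteq> 0 \<longrightarrow> P J K" using assms(1) unfolding expandable_def by blast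
  obtain b where b: "B = (\<lambda>x y. \<Sum>J\<in>UNIV. \<Sum>K\<in>UNIV. b J K * nstr J K x y)"
    "\<forall>J K. b J K \<noteq> 0 \<longrightarrow> P J K" using assms(2) unfolding expandable_def by blast
  have "(\<lambda>x y. A x y + B x y) = (\<lambda>x y. \<Sum>J\<in>UNIV. \<Sum>K\<in>UNIV. (a J K + b J K) * nstr J K x y)"
    by (simp add: a(1) b(1) distrib_right sum.distrib)
  moreover have "a J K + b J K \<noteq> 0 \<Longrightarrow> P J K" for J K
    using a(2) b(2) by (metis add.right_neutral)
  ultimately show ?thesis unfolding expandable_def by (intro exI[of _ "\<lambda>J K. a J K + b J K"]) blast
qed

lemma expandable_scale:
  assumes "expandable P A"
  shows "expandable P (\<lambda>x y. c * A x y)"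
proof -
  obtain a where a: "A = (\<lambda>x y. \<Sum>J\<in>UNIV. \<Sum>K\<in>UNIV. a J K * nstr J K x y)"
    "\<forall>J K. a J K \<noteq> 0 \<longrightarrow> P J K" using assms unfolding expandable_def by blast
  have "(\<lambda>x y. c * A x y) = (\<lambda>x y. \<Sum>J\<in>UNIV. \<Sum>K\<in>UNIV. (c * a J K) * nstr J K x y)"
    by (simp add: a(1) sum_distrib_left mult.assoc)
  moreover have "c * a J K \<noteq> 0 \<Longrightarrow> P J K" for J K
    using a(2) by (metis mult_zero_right)
  ultimately show ?thesis unfolding expandable_def by (intro exI[of _ "\<lambda>J K. c * a J K"]) blast
qed

lemma expandable_diff:
  "expandable P A \<Longrightarrow> expandable P B \<Longrightarrow> expandable P (\<lambda>x y. A x y - B x y)"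
  using expandable_add[of P A "\<lambda>x y. -1 * B x y"] expandable_scale[of P B "-1"] by simp

lemma expandable_sum:
  "finite S \<Longrightarrow> (\<And>s. s \<in> S \<Longrightarrow> expandable P (A s)) \<Longrightarrow> expandable P (\<lambda>x y. \<Sum>s\<in>S. A s x y)"
  by (induction S rule: finite_induct) (simp_all add: expandable_zero expandable_add)

lemma expandable_nstr:
  assumes "P J K"
  shows "expandable P (nstr J K)"
proof -
  define e :: "'a set \<Rightarrow> 'a set \<Rightarrow> complex"
    where "e J' K' = (if J' = J then if K' = K then 1 else 0 else 0)" for J' K'
  have "e J' K' * nstr J' K' x y = (if K' = K then if J' = J then nstr J K x y else 0 else 0)"
    for J' K' x y unfolding e_def by simp
  then have "nstr J K = (\<lambda>x y. \<Sum>J'\<in>UNIV. \<Sum>K'\<in>UNIV. e J' K' * nstr J' K' x y)"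
    by simp
  moreover have "e J' K' \<noteq> 0 \<Longrightarrow> P J' K'" for J' K'
    using assms unfolding e_def by (simp split: if_splits)
  ultimately show ?thesis unfolding expandable_def by blast
qed

lemma expansion_at_vac:
  fixes Op :: "'v::finite qop"
  assumes "Op = (\<lambda>x y. \<Sum>J\<in>UNIV. \<Sum>K\<in>UNIV. e J K * nstr J K x y)"
  shows "Op J {} = e J {}"
proof -
  have "e J' K * nstr J' K J {} = (if K = {} then if J' = J then e J {} else 0 else 0)" for J' K
    by (auto simp: nstr_def)
  then show ?thesis using assms by simp
qed

lemma sum_Pow_neg_one_power:
  assumes "finite A"
  shows "(\<Sum>T\<in>Pow A. (-1::complex) ^ card T) = (if A = {} then 1 else 0)"
proof -
  have "(\<Prod>x\<in>A. (1::complex) - 1) = (\<Sum>X\<in>Pow A. (-1) ^ card X * (\<Prod>x\<in>X. 1) * (\<Prod>x\<in>A-X. 1))"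
    by (rule prod_diff_conv_sum[OF assms])
  then have "(\<Sum>T\<in>Pow A. (-1::complex) ^ card T) = 0 ^ card A" by simp
  then show ?thesis using assms by (simp add: card_gt_0_iff)
qed

text \<open>A string constrains only its own sites; the alternating sum over the extra sites T forces
  the sites of Z outside a and b to be empty.\<close>

lemma local_transition_eq_sum_nstr:
  fixes Z :: "'v::finite set"
  assumes "a \<subseteq> Z" "b \<subseteq> Z"
  shows "local_transition Z a b x y =
    (\<Sum>T\<in>Pow (Z - (a \<union> b)). (-1::complex) ^ card T * nstr (b \<union> T) (a \<union> T) x y)"
proof -
  define C where "C \<longleftrightarrow> a \<subseteq> y \<and> b \<inter> (y - a) = {} \<and> x = (y - a) \<union> b"
  have "nstr (b \<union> T) (a \<union> T) x y = (if T \<subseteq> y \<and> C then 1 else 0)" if "T \<in> Pow (Z - (a \<union> b))" for T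
    using that unfolding nstr_def C_def by auto
  then have "(\<Sum>T\<in>Pow (Z - (a \<union> b)). (-1::complex) ^ card T * nstr (b \<union> T) (a \<union> T) x y)
      = (\<Sum>T\<in>Pow (Z - (a \<union> b)). if T \<subseteq> y \<and> C then (-1::complex) ^ card T else 0)"
    by (intro sum.cong) auto
  also have "\<dots> = (if C then (\<Sum>T\<in>{T \<in> Pow (Z - (a \<union> b)). T \<subseteq> y}. (-1::complex) ^ card T) else 0)"
    by (auto simp: sum.inter_filter[symmetric])
  also have "{T \<in> Pow (Z - (a \<union> b)). T \<subseteq> y} = Pow ((Z - (a \<union> b)) \<inter> y)" by auto
  also have "(if C then (\<Sum>T\<in>Pow ((Z - (a \<union> b)) \<inter> y). (-1::complex) ^ card T) else 0)
      = (if C \<and> (Z - (a \<union> b)) \<inter> y = {} then 1 else 0)"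
    using sum_Pow_neg_one_power[of "(Z - (a \<union> b)) \<inter> y"] by simp
  also have "C \<and> (Z - (a \<union> b)) \<inter> y = {} \<longleftrightarrow> y \<inter> Z = a \<and> x = (y - Z) \<union> b"
    unfolding C_def using assms by blast
  finally show ?thesis unfolding local_transition_def by simp
qed

lemma expandable_local_transition:
  fixes Z :: "'v::finite set"
  assumes "a \<subseteq> Z" "b \<subseteq> Z"
  shows "expandable (\<lambda>J K. J \<union> K \<subseteq> Z) (local_transition Z a b)"
proof -
  have "local_transition Z a b =
      (\<lambda>x y. \<Sum>T\<in>Pow (Z - (a \<union> b)). (-1) ^ card T * nstr (b \<union> T) (a \<union> T) x y)"
    using local_transition_eq_sum_nstr[OF assms] by blast
  moreover have "expandable (\<lambda>J K. J \<union> K \<subseteq> Z)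
      (\<lambda>x y. \<Sum>T\<in>Pow (Z - (a \<union> b)). (-1) ^ card T * nstr (b \<union> T) (a \<union> T) x y)"
    using assms by (intro expandable_sum expandable_scale expandable_nstr) auto
  ultimately show ?thesis by simp
qed

lemma supported_in_imp_expandable:
  fixes Op :: "'v::finite qop"
  assumes "supported_in Op Z"
  shows "expandable (\<lambda>J K. J \<union> K \<subseteq> Z) Op"
proof -
  have Op: "\<And>x y. Op x y = (if x - Z = y - Z then Op (x \<inter> Z) (y \<inter> Z) else 0)"
    using assms supported_in_iff by metis
  have "Op x y = (\<Sum>a\<in>Pow Z. \<Sum>b\<in>Pow Z. Op b a * local_transition Z a b x y)" for x y
  proof -
    define v where "v = (if x - Z = y - Z then Op (x \<inter> Z) (y \<inter> Z) else 0)"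
    have "Op b a * local_transition Z a b x y = (if b = x \<inter> Z then if a = y \<inter> Z then v else 0 else 0)"
      if "b \<in> Pow Z" for a b
      using that unfolding local_transition_def v_def by auto
    then have "(\<Sum>a\<in>Pow Z. \<Sum>b\<in>Pow Z. Op b a * local_transition Z a b x y)
        = (\<Sum>a\<in>Pow Z. \<Sum>b\<in>Pow Z. if b = x \<inter> Z then if a = y \<inter> Z then v else 0 else 0)"
      by (intro sum.cong refl)
    also have "\<dots> = v" by simp
    finally have "(\<Sum>a\<in>Pow Z. \<Sum>b\<in>Pow Z. Op b a * local_transition Z a b x y) = v" .
    then show ?thesis using Op[of x y] unfolding v_def by simp
  qed
  then have "Op = (\<lambda>x y. \<Sum>a\<in>Pow Z. \<Sum>b\<in>Pow Z. Op b a * local_transition Z a b x y)" by blast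
  moreover have "expandable (\<lambda>J K. J \<union> K \<subseteq> Z)
      (\<lambda>x y. \<Sum>a\<in>Pow Z. \<Sum>b\<in>Pow Z. Op b a * local_transition Z a b x y)"
    by (intro expandable_sum expandable_scale expandable_local_transition) auto
  ultimately show ?thesis by simp
qed

lemma string_range_le_if_pairwise_near:
  "pairwise_near E n Z \<Longrightarrow> J \<union> K \<subseteq> Z \<Longrightarrow> string_range_le E J K (n + 1)"
  unfolding string_range_le_def pairwise_near_def by (auto simp: gdist_less_iff_near)

lemma range_le_if_supported_in:
  assumes "supported_in Op Z" "pairwise_near E n Z"
  shows "range_le E Op (n + 1)"
  unfolding range_le_iff_expandable
  using supported_in_imp_expandable[OF assms(1)]
  by (rule expandable_mono) (rule string_range_le_if_pairwise_near[OF assms(2)])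

lemma string_range_le_imp_pairwise_near:
  "string_range_le E J K R \<Longrightarrow> pairwise_near E (R - 1) (J \<union> K)"
  unfolding string_range_le_def pairwise_near_def by (auto simp: gdist_less_iff_near)

section \<open>Operators on configurations\<close>

lemma app_vac: "app Op vac x = Op x {}"
proof -
  have "app Op vac x = (\<Sum>y\<in>UNIV. if y = {} then Op x y else 0)"
    unfolding app_def vac_def by (intro sum.cong) auto
  then show ?thesis by simp
qed

lemma app_zero: "app (\<lambda>x y. 0) \<psi> = (\<lambda>_. 0)"
  unfolding app_def by simp

lemma app_add: "app (\<lambda>x y. A x y + B x y) \<psi> = (\<lambda>x. app A \<psi> x + app B \<psi> x)"
  unfolding app_def by (simp add: distrib_right sum.distrib)

lemma app_diff: "app (\<lambda>x y. A x y - B x y) \<psi> = (\<lambda>x. app A \<psi> x - app B \<psi> x)"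
  unfolding app_def by (simp add: left_diff_distrib sum_subtractf)

lemma app_scale: "app (\<lambda>x y. a * A x y) \<psi> = (\<lambda>x. a * app A \<psi> x)"
  unfolding app_def by (simp add: sum_distrib_left mult.assoc)

lemma app_sum: "app (\<lambda>x y. \<Sum>s\<in>S. A s x y) \<psi> = (\<lambda>x. \<Sum>s\<in>S. app (A s) \<psi> x)"
  unfolding app_def by (simp add: sum_distrib_right sum.swap[of _ S])

lemma app_idop: "app idop \<psi> = \<psi>"
proof
  fix x
  have "app idop \<psi> x = (\<Sum>y\<in>UNIV. if y = x then \<psi> y else 0)"
    unfolding app_def idop_def by (intro sum.cong) auto
  then show "app idop \<psi> x = \<psi> x" by simp
qed

definition perm_op :: "('v set \<Rightarrow> 'v set) \<Rightarrow> 'v qop" where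
  "perm_op \<sigma> = (\<lambda>x y. if x = \<sigma> y then 1 else 0)"

lemma sum_perm_op_row:
  fixes \<sigma> :: "'v::finite set \<Rightarrow> 'v set"
  assumes "\<And>y. \<sigma> (\<rho> y) = y" "\<And>y. \<rho> (\<sigma> y) = y"
  shows "(\<Sum>z\<in>UNIV. perm_op \<sigma> x z * f z) = f (\<rho> x)"
proof -
  have "perm_op \<sigma> x z * f z = (if z = \<rho> x then f z else 0)" for z
    using assms unfolding perm_op_def by auto
  then show ?thesis by simp
qed

lemma mmul_perm_op: "mmul (perm_op \<sigma>) (perm_op \<rho>) = perm_op (\<sigma> \<circ> \<rho>)"
proof (intro ext)
  fix x y
  have "perm_op \<sigma> x z * perm_op \<rho> z y = (if z = \<rho> y then perm_op \<sigma> x (\<rho> y) else 0)" for z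
    unfolding perm_op_def by simp
  then show "mmul (perm_op \<sigma>) (perm_op \<rho>) x y = perm_op (\<sigma> \<circ> \<rho>) x y"
    unfolding mmul_def by (simp add: perm_op_def)
qed

lemma perm_op_id: "perm_op id = idop"
  unfolding perm_op_def idop_def by simp

lemma conj_perm_op:
  fixes \<sigma> :: "'v::finite set \<Rightarrow> 'v set"
  assumes "\<And>y. \<sigma> (\<rho> y) = y" "\<And>y. \<rho> (\<sigma> y) = y"
  shows "mmul (mmul (perm_op \<sigma>) Op) (perm_op \<rho>) = (\<lambda>x y. Op (\<rho> x) (\<rho> y))"
proof (intro ext)
  fix x y
  have "mmul (perm_op \<sigma>) Op x z = Op (\<rho> x) z" for z
    unfolding mmul_def by (rule sum_perm_op_row[OF assms])
  moreover have "Op (\<rho> x) z * perm_op \<rho> z y = (if z = \<rho> y then Op (\<rho> x) (\<rho> y) else 0)" for z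
    unfolding perm_op_def by simp
  ultimately show "mmul (mmul (perm_op \<sigma>) Op) (perm_op \<rho>) x y = Op (\<rho> x) (\<rho> y)"
    unfolding mmul_def[of "mmul (perm_op \<sigma>) Op"] by simp
qed

lemma app_perm_op:
  fixes \<sigma> :: "'v::finite set \<Rightarrow> 'v set"
  assumes "\<And>y. \<sigma> (\<rho> y) = y" "\<And>y. \<rho> (\<sigma> y) = y"
  shows "app (perm_op \<sigma>) \<psi> = (\<lambda>x. \<psi> (\<rho> x))"
  unfolding app_def using sum_perm_op_row[OF assms] by blast

definition spreads_by :: "('v \<Rightarrow> 'v \<Rightarrow> bool) \<Rightarrow> nat \<Rightarrow> ('v set \<Rightarrow> 'v set) \<Rightarrow> bool" where
  "spreads_by E \<delta> \<rho> \<longleftrightarrow> (\<forall>(Op :: 'v qop) Z n. supported_in Op Z \<longrightarrow> pairwise_near E n Z \<longrightarrow>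
     (\<exists>Z'. supported_in (\<lambda>x y. Op (\<rho> x) (\<rho> y)) Z' \<and> pairwise_near E (n + \<delta>) Z'))"

lemma spreads_by_id: "spreads_by E 0 id"
  unfolding spreads_by_def by auto

lemma spreads_by_comp:
  fixes E :: "'v \<Rightarrow> 'v \<Rightarrow> bool"
  assumes "spreads_by E \<delta>\<^sub>1 \<rho>\<^sub>1" "spreads_by E \<delta>\<^sub>2 \<rho>\<^sub>2"
  shows "spreads_by E (\<delta>\<^sub>1 + \<delta>\<^sub>2) (\<rho>\<^sub>1 \<circ> \<rho>\<^sub>2)"
  unfolding spreads_by_def
proof (intro allI impI)
  fix Op :: "'v qop" and Z n
  assume "supported_in Op Z" "pairwise_near E n Z"
  then obtain Z1 where "supported_in (\<lambda>x y. Op (\<rho>\<^sub>1 x) (\<rho>\<^sub>1 y)) Z1" "pairwise_near E (n + \<delta>\<^sub>1) Z1"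
    using assms(1) unfolding spreads_by_def by blast
  then obtain Z2 where "supported_in (\<lambda>x y. Op (\<rho>\<^sub>1 (\<rho>\<^sub>2 x)) (\<rho>\<^sub>1 (\<rho>\<^sub>2 y))) Z2"
    "pairwise_near E (n + \<delta>\<^sub>1 + \<delta>\<^sub>2) Z2"
    using assms(2) unfolding spreads_by_def by blast
  then show "\<exists>Z'. supported_in (\<lambda>x y. Op ((\<rho>\<^sub>1 \<circ> \<rho>\<^sub>2) x) ((\<rho>\<^sub>1 \<circ> \<rho>\<^sub>2) y)) Z' \<and>
      pairwise_near E (n + (\<delta>\<^sub>1 + \<delta>\<^sub>2)) Z'"
    by (auto simp: add.assoc)
qed

lemma range_le_conj:
  fixes Op :: "'v::finite qop"
  assumes "spreads_by E \<delta> \<rho>" "range_le E Op R" "0 < R"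
  shows "range_le E (\<lambda>x y. Op (\<rho> x) (\<rho> y)) (R + \<delta>)"
proof -
  obtain e where e: "Op = (\<lambda>x y. \<Sum>J\<in>UNIV. \<Sum>K\<in>UNIV. e J K * nstr J K x y)"
    "\<And>J K. e J K \<noteq> 0 \<Longrightarrow> string_range_le E J K R"
    using assms(2) unfolding range_le_def by blast
  have "range_le E (\<lambda>x y. e J K * nstr J K (\<rho> x) (\<rho> y)) (R + \<delta>)" for J K
  proof (cases "e J K = 0")
    case True
    then show ?thesis using expandable_zero by (simp add: range_le_iff_expandable)
  next
    case False
    then have "pairwise_near E (R - 1) (J \<union> K)"
      using e(2) string_range_le_imp_pairwise_near by blast
    then obtain Z' where "supported_in (\<lambda>x y. nstr J K (\<rho> x) (\<rho> y)) Z'"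
      "pairwise_near E (R - 1 + \<delta>) Z'"
      using assms(1) supported_in_nstr unfolding spreads_by_def by blast
    then have "range_le E (\<lambda>x y. nstr J K (\<rho> x) (\<rho> y)) (R + \<delta>)"
      using range_le_if_supported_in assms(3) by fastforce
    then show ?thesis unfolding range_le_iff_expandable by (rule expandable_scale)
  qed
  then have "range_le E (\<lambda>x y. \<Sum>J\<in>UNIV. \<Sum>K\<in>UNIV. e J K * nstr J K (\<rho> x) (\<rho> y)) (R + \<delta>)"
    unfolding range_le_iff_expandable by (intro expandable_sum) auto
  then show ?thesis by (simp add: e(1))
qed

lemma loc_preserving_perm_op:
  fixes \<sigma> :: "'v::finite set \<Rightarrow> 'v set"
  assumes inv: "\<And>y. \<sigma> (\<rho> y) = y" "\<And>y. \<rho> (\<sigma> y) = y"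
    and spread: "spreads_by E \<delta> \<sigma>" "spreads_by E \<delta> \<rho>"
  shows "loc_preserving E \<delta> (perm_op \<sigma>)"
  unfolding loc_preserving_def
proof (intro exI[of _ "perm_op \<rho>"] conjI allI impI)
  have "\<sigma> \<circ> \<rho> = id" "\<rho> \<circ> \<sigma> = id" using inv by auto
  then show "inverse_ops (perm_op \<sigma>) (perm_op \<rho>)"
    by (simp add: inverse_ops_def mmul_perm_op perm_op_id)
next
  fix Op R assume "0 < R" "range_le E Op R"
  then show "range_le E (mmul (mmul (perm_op \<sigma>) Op) (perm_op \<rho>)) (R + \<delta>)"
    "range_le E (mmul (mmul (perm_op \<rho>) Op) (perm_op \<sigma>)) (R + \<delta>)"
    using range_le_conj spread by (simp_all add: conj_perm_op inv)
qed

lemma sum_UNIV_triple: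
  fixes f :: "'a::finite \<times> 'b::finite \<times> 'c::finite \<Rightarrow> 'd::comm_monoid_add"
  shows "(\<Sum>\<tau>\<in>UNIV. f \<tau>) = (\<Sum>a\<in>UNIV. \<Sum>b\<in>UNIV. \<Sum>c\<in>UNIV. f (a, b, c))"
proof -
  have "(\<Sum>\<tau>\<in>UNIV \<times> (UNIV \<times> UNIV). f \<tau>) = (\<Sum>a\<in>UNIV. \<Sum>b\<in>UNIV. \<Sum>c\<in>UNIV. f (a, b, c))"
    by (simp only: sum.cartesian_product')
  then show ?thesis by simp
qed

lemma mmul_sdag_sann: "mmul (sdag i) (sann i) = nstr {i} {i}"
proof (intro ext)
  fix x y
  have "sdag i x z * sann i z y = (if z = y - {i} then nstr {i} {i} x y else 0)" for z
    unfolding sdag_def sann_def nstr_def by auto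
  then show "mmul (sdag i) (sann i) x y = nstr {i} {i} x y" unfolding mmul_def by simp
qed

definition number_op :: "'v::finite qop" where
  "number_op = (\<lambda>x y. \<Sum>i\<in>UNIV. mmul (sdag i) (sann i) x y)"

lemma number_op_eq: "number_op x y = (if x = y then of_nat (card y) else 0)"
proof -
  have "mmul (sdag i) (sann i) x y = (if x = y then (if i \<in> y then 1 else 0) else 0)" for i
    unfolding mmul_sdag_sann nstr_def by auto
  then show ?thesis unfolding number_op_def by (simp add: sum.If_cases)
qed

lemma app_number_op_vac: "app number_op vac = (\<lambda>_. 0)"
  by (rule ext) (simp add: app_vac number_op_eq)

lemma range_le_number_op: "0 < R \<Longrightarrow> range_le E number_op R"
  unfolding range_le_iff_expandable number_op_def mmul_sdag_sann
  by (intro expandable_sum expandable_nstr) (auto simp: string_range_le_def gdist_less_iff_near near_refl)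

lemma range_le_idop:
  fixes E :: "'v::finite \<Rightarrow> 'v \<Rightarrow> bool"
  assumes "0 < R"
  shows "range_le E idop R"
proof -
  have "(idop :: 'v qop) = nstr {} {}" unfolding idop_def nstr_def by auto
  moreover have "string_range_le E {} {} R" using assms by (simp add: string_range_le_def)
  then have "expandable (\<lambda>J K. string_range_le E J K R) (nstr {} {})" by (rule expandable_nstr)
  ultimately show ?thesis unfolding range_le_iff_expandable by simp
qed

section \<open>The swap map\<close>

locale cluster_family =
  fixes E :: "'v::finite \<Rightarrow> 'v \<Rightarrow> bool" and I :: "'v \<Rightarrow> 'v set" and c d :: nat
  assumes graph: "simple_graph E" and c_gt_1: "1 < c" and card_I: "\<And>i. card (I i) = c"
    and near_I: "\<And>i j. j \<in> I i \<Longrightarrow> near E d j i" and inj_I: "inj I"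
begin

lemma I_nonempty: "I i \<noteq> {}"
  using card_I[of i] c_gt_1 by auto

lemma I_ne_singleton: "I i \<noteq> {v}"
  using card_I[of i] c_gt_1 by auto

lemma I_subset_imp_eq: "I l \<subseteq> I m \<Longrightarrow> l = m"
  using card_subset_eq[of "I m" "I l"] card_I inj_I by (simp add: inj_eq)

lemma pairwise_near_I: "pairwise_near E (2 * d) (I l)"
  unfolding pairwise_near_def mult_2 using near_via[OF graph] near_I by blast

lemma d_pos: "0 < d"
proof -
  fix i
  have "\<not> I i \<subseteq> {i}"
    using I_nonempty[of i] I_ne_singleton[of i i] subset_singletonD by blast
  then have "\<exists>j\<in>I i. j \<noteq> i" by blast
  then obtain j where "near E d j i" "j \<noteq> i" using near_I by blast
  then show ?thesis unfolding near_def by (auto intro: Nat.gr0I)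
qed

definition nbhd :: "'v \<Rightarrow> 'v set" where
  "nbhd i = {v. near E (2 * d) v i}"

definition swap_at :: "'v \<Rightarrow> 'v set \<Rightarrow> 'v set" where
  "swap_at i s = (if s = {i} then I i else if s = I i then {i} else s)"

text \<open>For sparse L the neighbourhoods of the vertices of L are disjoint, so the swaps on them
  commute and layer_swap L is an involution.\<close>

definition layer_swap :: "'v set \<Rightarrow> 'v set \<Rightarrow> 'v set" where
  "layer_swap L y = (y - (\<Union>i\<in>L. nbhd i)) \<union> (\<Union>i\<in>L. swap_at i (y \<inter> nbhd i))"

definition sparse :: "'v set \<Rightarrow> bool" where
  "sparse L \<longleftrightarrow> (\<forall>i\<in>L. \<forall>j\<in>L. i \<noteq> j \<longrightarrow> \<not> near E (4 * d) i j)"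

definition aligned :: "'v set \<Rightarrow> 'v set \<Rightarrow> bool" where
  "aligned L W \<longleftrightarrow> (\<forall>i\<in>L. nbhd i \<subseteq> W \<or> nbhd i \<inter> W = {})"

lemma mem_nbhd_self: "i \<in> nbhd i"
  unfolding nbhd_def by (simp add: near_refl)

lemma I_subset_nbhd: "I i \<subseteq> nbhd i"
  unfolding nbhd_def using near_I near_mono by fastforce

lemma I_subset_nbhd_of_mem: "i \<in> I j \<Longrightarrow> I j \<subseteq> nbhd i"
  unfolding nbhd_def mult_2 using near_via[OF graph] near_I by blast

lemma swap_at_subset: "s \<subseteq> nbhd i \<Longrightarrow> swap_at i s \<subseteq> nbhd i"
  unfolding swap_at_def using I_subset_nbhd mem_nbhd_self by auto

lemma swap_at_swap_at: "swap_at i (swap_at i s) = s"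
  unfolding swap_at_def using I_ne_singleton[of i i] by auto

lemma swap_at_empty: "swap_at i {} = {}"
  unfolding swap_at_def using I_nonempty[of i] by auto

lemma sparse_nbhd_disjoint:
  assumes "sparse L" "i \<in> L" "j \<in> L" "i \<noteq> j"
  shows "nbhd i \<inter> nbhd j = {}"
proof (rule ccontr)
  assume "nbhd i \<inter> nbhd j \<noteq> {}"
  then obtain v where "near E (2 * d) v i" "near E (2 * d) v j" unfolding nbhd_def by blast
  then have "near E (2 * d + 2 * d) i j" using near_via[OF graph] near_sym[OF graph] by blast
  then show False using assms unfolding sparse_def by (simp add: add_mult_distrib[symmetric])
qed

lemma layer_swap_Int_nbhd:
  assumes "sparse L" "i \<in> L"
  shows "layer_swap L y \<inter> nbhd i = swap_at i (y \<inter> nbhd i)"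
proof -
  have "swap_at j (y \<inter> nbhd j) \<inter> nbhd i = (if j = i then swap_at i (y \<inter> nbhd i) else {})"
    if "j \<in> L" for j
  proof (cases "j = i")
    case True
    then show ?thesis using swap_at_subset[of "y \<inter> nbhd i" i] by auto
  next
    case False
    have "swap_at j (y \<inter> nbhd j) \<subseteq> nbhd j" by (rule swap_at_subset) blast
    then show ?thesis using sparse_nbhd_disjoint[OF assms(1) that assms(2) False] False by auto
  qed
  moreover have "(y - (\<Union>i\<in>L. nbhd i)) \<inter> nbhd i = {}" using assms(2) by blast
  moreover have "layer_swap L y \<inter> nbhd i
      = ((y - (\<Union>i\<in>L. nbhd i)) \<inter> nbhd i) \<union> (\<Union>j\<in>L. swap_at j (y \<inter> nbhd j) \<inter> nbhd i)"
    unfolding layer_swap_def by blast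
  ultimately have "layer_swap L y \<inter> nbhd i = (\<Union>j\<in>L. if j = i then swap_at i (y \<inter> nbhd i) else {})"
    by simp
  also have "\<dots> = swap_at i (y \<inter> nbhd i)" using assms(2) by (auto split: if_splits)
  finally show ?thesis .
qed

lemma layer_swap_Diff_nbhds: "layer_swap L y - (\<Union>i\<in>L. nbhd i) = y - (\<Union>i\<in>L. nbhd i)"
  unfolding layer_swap_def using swap_at_subset[of "y \<inter> nbhd _"] by blast

lemma layer_swap_layer_swap:
  assumes "sparse L"
  shows "layer_swap L (layer_swap L y) = y"
proof -
  have "layer_swap L (layer_swap L y)
      = (y - (\<Union>i\<in>L. nbhd i)) \<union> (\<Union>i\<in>L. swap_at i (swap_at i (y \<inter> nbhd i)))"
    unfolding layer_swap_def[of L "layer_swap L y"]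
    using layer_swap_Int_nbhd[OF assms] layer_swap_Diff_nbhds by simp
  also have "\<dots> = y" by (simp add: swap_at_swap_at) blast
  finally show ?thesis .
qed

lemma layer_swap_fixed: "(\<And>i. i \<in> L \<Longrightarrow> swap_at i (y \<inter> nbhd i) = y \<inter> nbhd i) \<Longrightarrow> layer_swap L y = y"
  unfolding layer_swap_def by auto

lemma layer_swap_empty: "layer_swap L {} = {}"
  unfolding layer_swap_def by (simp add: swap_at_empty)

lemma layer_swap_Int:
  assumes "aligned L W"
  shows "layer_swap L (y \<inter> W) = layer_swap L y \<inter> W"
proof -
  have "swap_at i (y \<inter> W \<inter> nbhd i) = swap_at i (y \<inter> nbhd i) \<inter> W" if "i \<in> L" for i
  proof (cases "nbhd i \<subseteq> W")
    case True
    then have "y \<inter> W \<inter> nbhd i = y \<inter> nbhd i" by blast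
    moreover have "swap_at i (y \<inter> nbhd i) \<subseteq> W" using swap_at_subset[of "y \<inter> nbhd i" i] True by blast
    ultimately show ?thesis by auto
  next
    case False
    then have "nbhd i \<inter> W = {}" using assms that unfolding aligned_def by blast
    then have "y \<inter> W \<inter> nbhd i = {}" "swap_at i (y \<inter> nbhd i) \<inter> W = {}"
      using swap_at_subset[of "y \<inter> nbhd i" i] by blast+
    then show ?thesis by (simp add: swap_at_empty)
  qed
  then show ?thesis unfolding layer_swap_def by blast
qed

lemma layer_swap_Diff:
  assumes "aligned L W"
  shows "layer_swap L (y - W) = layer_swap L y - W"
proof -
  have "swap_at i ((y - W) \<inter> nbhd i) = swap_at i (y \<inter> nbhd i) - W" if "i \<in> L" for i
  proof (cases "nbhd i \<subseteq> W")
    case True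
    then have "(y - W) \<inter> nbhd i = {}" by blast
    moreover have "swap_at i (y \<inter> nbhd i) - W = {}" using swap_at_subset[of "y \<inter> nbhd i" i] True by blast
    ultimately show ?thesis by (simp add: swap_at_empty)
  next
    case False
    then have "nbhd i \<inter> W = {}" using assms that unfolding aligned_def by blast
    then have "(y - W) \<inter> nbhd i = y \<inter> nbhd i" "swap_at i (y \<inter> nbhd i) - W = swap_at i (y \<inter> nbhd i)"
      using swap_at_subset[of "y \<inter> nbhd i" i] by blast+
    then show ?thesis by simp
  qed
  then show ?thesis unfolding layer_swap_def by blast
qed

lemma supported_in_layer_swap_conj:
  assumes L: "sparse L" and supp: "supported_in Op Z" and "Z \<subseteq> W" and W: "aligned L W"
  shows "supported_in (\<lambda>x y. Op (layer_swap L x) (layer_swap L y)) W"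
  unfolding supported_in_iff
proof (intro allI)
  fix x y
  let ?T = "layer_swap L"
  have Op: "\<And>a b. Op a b = (if a - Z = b - Z then Op (a \<inter> Z) (b \<inter> Z) else 0)"
    using supp supported_in_iff by metis
  have Int: "?T (x \<inter> W) = ?T x \<inter> W" "?T (y \<inter> W) = ?T y \<inter> W"
    using layer_swap_Int[OF W] by auto
  show "Op (?T x) (?T y) = (if x - W = y - W then Op (?T (x \<inter> W)) (?T (y \<inter> W)) else 0)"
  proof (cases "x - W = y - W")
    case False
    then have "?T (x - W) \<noteq> ?T (y - W)" using layer_swap_layer_swap[OF L] by metis
    then have "?T x - Z \<noteq> ?T y - Z" using layer_swap_Diff[OF W] \<open>Z \<subseteq> W\<close> by auto
    then show ?thesis using Op[of "?T x" "?T y"] False by simp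
  next
    case True
    then have "?T x - W = ?T y - W" using layer_swap_Diff[OF W] by metis
    then have "?T x - Z = ?T y - Z \<longleftrightarrow> ?T (x \<inter> W) - Z = ?T (y \<inter> W) - Z"
      using Int \<open>Z \<subseteq> W\<close> by blast
    moreover have "?T x \<inter> Z = ?T (x \<inter> W) \<inter> Z" "?T y \<inter> Z = ?T (y \<inter> W) \<inter> Z"
      using Int \<open>Z \<subseteq> W\<close> by auto
    ultimately show ?thesis
      using Op[of "?T x" "?T y"] Op[of "?T (x \<inter> W)" "?T (y \<inter> W)"] True by simp
  qed
qed

definition nbhd_hull :: "'v set \<Rightarrow> 'v set \<Rightarrow> 'v set" where
  "nbhd_hull L Z = Z \<union> (\<Union>i\<in>{i \<in> L. nbhd i \<inter> Z \<noteq> {}}. nbhd i)"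

lemma aligned_nbhd_hull:
  assumes L: "sparse L"
  shows "aligned L (nbhd_hull L Z)"
  unfolding aligned_def
proof
  fix i assume i: "i \<in> L"
  show "nbhd i \<subseteq> nbhd_hull L Z \<or> nbhd i \<inter> nbhd_hull L Z = {}"
  proof (cases "nbhd i \<inter> Z = {}")
    case True
    then have "nbhd i \<inter> nbhd_hull L Z = {}"
      using sparse_nbhd_disjoint[OF L i] unfolding nbhd_hull_def by blast
    then show ?thesis ..
  qed (use i in \<open>auto simp: nbhd_hull_def\<close>)
qed

lemma pairwise_near_nbhd_hull:
  assumes "pairwise_near E n Z"
  shows "pairwise_near E (4 * d + n + 4 * d) (nbhd_hull L Z)"
proof (rule pairwise_near_thicken[OF graph _ assms])
  fix a assume a: "a \<in> nbhd_hull L Z"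
  show "\<exists>z\<in>Z. near E (4 * d) a z"
  proof (cases "a \<in> Z")
    case True
    moreover have "near E (4 * d) a a" by (rule near_refl)
    ultimately show ?thesis by blast
  next
    case False
    then obtain i z where "a \<in> nbhd i" "z \<in> nbhd i" "z \<in> Z" using a unfolding nbhd_hull_def by blast
    then have "near E (2 * d + 2 * d) a z" using near_via[OF graph] unfolding nbhd_def by blast
    then have "near E (4 * d) a z" by simp
    then show ?thesis using \<open>z \<in> Z\<close> by blast
  qed
qed

text \<open>Conjugation by a layer swap only involves the neighbourhoods meeting the support, and each
  of them has diameter 4d.\<close>

lemma spreads_by_layer_swap:
  assumes L: "sparse L"
  shows "spreads_by E (8 * d) (layer_swap L)"
  unfolding spreads_by_def
proof (intro allI impI)
  fix Op :: "'v qop" and Z n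
  assume "supported_in Op Z" "pairwise_near E n Z"
  moreover have "Z \<subseteq> nbhd_hull L Z" unfolding nbhd_hull_def by blast
  ultimately have "supported_in (\<lambda>x y. Op (layer_swap L x) (layer_swap L y)) (nbhd_hull L Z)"
    "pairwise_near E (n + 8 * d) (nbhd_hull L Z)"
    using supported_in_layer_swap_conj[OF L] aligned_nbhd_hull[OF L] pairwise_near_nbhd_hull
    by (auto simp: algebra_simps)
  then show "\<exists>Z'. supported_in (\<lambda>x y. Op (layer_swap L x) (layer_swap L y)) Z' \<and>
      pairwise_near E (n + 8 * d) Z'" by blast
qed

lemma layer_swap_singleton_mem:
  assumes L: "sparse L" and j: "j \<in> L"
  shows "layer_swap L {j} = I j"
proof -
  have "swap_at i ({j} \<inter> nbhd i) = (if i = j then I j else {})" if i: "i \<in> L" for i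
  proof (cases "i = j")
    case True
    then show ?thesis using mem_nbhd_self[of j] unfolding swap_at_def by simp
  next
    case False
    have "j \<notin> nbhd i" using sparse_nbhd_disjoint[OF L i j False] mem_nbhd_self[of j] by blast
    then have "{j} \<inter> nbhd i = {}" by blast
    then show ?thesis using False by (simp add: swap_at_empty)
  qed
  moreover have "{j} - (\<Union>i\<in>L. nbhd i) = {}" using j mem_nbhd_self by blast
  ultimately have "layer_swap L {j} = (\<Union>i\<in>L. if i = j then I j else {})"
    unfolding layer_swap_def by simp
  also have "\<dots> = I j" using j by (auto split: if_splits)
  finally show ?thesis .
qed

lemma layer_swap_singleton_not_mem:
  assumes "j \<notin> L"
  shows "layer_swap L {j} = {j}"
proof (rule layer_swap_fixed)
  fix i assume "i \<in> L"
  then have "i \<noteq> j" using assms by blast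
  moreover have "{j} \<noteq> I i" using I_ne_singleton[of i j] by simp
  ultimately show "swap_at i ({j} \<inter> nbhd i) = {j} \<inter> nbhd i"
    unfolding swap_at_def using I_nonempty[of i] by (cases "j \<in> nbhd i") auto
qed

lemma layer_swap_I:
  assumes "j \<notin> L"
  shows "layer_swap L (I j) = I j"
proof (rule layer_swap_fixed)
  fix i assume i: "i \<in> L"
  have "I j \<inter> nbhd i \<noteq> {i}"
  proof
    assume *: "I j \<inter> nbhd i = {i}"
    then have "I j \<subseteq> nbhd i" using I_subset_nbhd_of_mem by blast
    then show False using * I_ne_singleton by blast
  qed
  moreover have "I j \<inter> nbhd i \<noteq> I i"
    using I_subset_imp_eq[of i j] i assms by blast
  ultimately show "swap_at i (I j \<inter> nbhd i) = I j \<inter> nbhd i" unfolding swap_at_def by simp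
qed

fun swaps :: "(nat \<Rightarrow> 'v set) \<Rightarrow> nat \<Rightarrow> 'v set \<Rightarrow> 'v set" where
  "swaps Lc 0 = id"
| "swaps Lc (Suc k) = layer_swap (Lc k) \<circ> swaps Lc k"

fun swaps_inv :: "(nat \<Rightarrow> 'v set) \<Rightarrow> nat \<Rightarrow> 'v set \<Rightarrow> 'v set" where
  "swaps_inv Lc 0 = id"
| "swaps_inv Lc (Suc k) = swaps_inv Lc k \<circ> layer_swap (Lc k)"

lemma swaps_swaps_inv: "(\<And>k. sparse (Lc k)) \<Longrightarrow> swaps Lc k (swaps_inv Lc k y) = y"
  by (induction k arbitrary: y) (simp_all add: layer_swap_layer_swap)

lemma swaps_inv_swaps: "(\<And>k. sparse (Lc k)) \<Longrightarrow> swaps_inv Lc k (swaps Lc k y) = y"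
  by (induction k arbitrary: y) (simp_all add: layer_swap_layer_swap)

lemma spreads_by_swaps: "(\<And>k. sparse (Lc k)) \<Longrightarrow> spreads_by E (8 * d * k) (swaps Lc k)"
proof (induction k)
  case 0
  show ?case using spreads_by_id[of E] by (simp add: id_def)
next
  case (Suc k)
  have "spreads_by E (8 * d + 8 * d * k) (layer_swap (Lc k) \<circ> swaps Lc k)"
    using Suc by (intro spreads_by_comp spreads_by_layer_swap) auto
  then show ?case by (simp only: swaps.simps mult_Suc_right)
qed

lemma spreads_by_swaps_inv: "(\<And>k. sparse (Lc k)) \<Longrightarrow> spreads_by E (8 * d * k) (swaps_inv Lc k)"
proof (induction k)
  case 0
  show ?case using spreads_by_id[of E] by (simp add: id_def)
next
  case (Suc k)
  have "spreads_by E (8 * d * k + 8 * d) (swaps_inv Lc k \<circ> layer_swap (Lc k))"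
    using Suc by (intro spreads_by_comp spreads_by_layer_swap) auto
  then show ?case by (metis add.commute mult_Suc_right swaps_inv.simps(2))
qed

lemma swaps_colour_classes_singleton:
  assumes "\<And>k. sparse {i. col i = k}"
  shows "swaps (\<lambda>k. {i. col i = k}) k {j} = (if col j < k then I j else {j})"
proof (induction k)
  case (Suc k)
  then show ?case
    using layer_swap_I[of j "{i. col i = k}"] layer_swap_singleton_mem[OF assms, of j k]
      layer_swap_singleton_not_mem[of j "{i. col i = k}"] by auto
qed simp

lemma swaps_empty: "swaps Lc k {} = {}"
  by (induction k) (simp_all add: layer_swap_empty)

definition qstate :: "'v state" where
  "qstate = (\<lambda>x. \<Sum>i\<in>UNIV. if x = I i then 1 else 0)"

lemma loc_preserving_swaps:
  assumes col_lt: "\<And>v. col v < K"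
    and col_sep: "\<And>a b. a \<noteq> b \<Longrightarrow> near E (4 * d) a b \<Longrightarrow> col a \<noteq> col b"
  shows "\<exists>M. loc_preserving E (8 * d * K) M \<and>
    app M Wstate = (\<lambda>x. complex_of_real (1 / sqrt (real (card (UNIV :: 'v set)))) * qstate x) \<and>
    app M vac = vac"
proof -
  define Lc where "Lc k = {i. col i = k}" for k
  have sparse: "sparse (Lc k)" for k
    unfolding sparse_def Lc_def using col_sep by blast
  let ?\<sigma> = "swaps Lc K" and ?\<rho> = "swaps_inv Lc K"
  have inv: "\<And>y. ?\<sigma> (?\<rho> y) = y" "\<And>y. ?\<rho> (?\<sigma> y) = y"
    using swaps_swaps_inv swaps_inv_swaps sparse by blast+
  then have \<rho>_eq: "?\<rho> x = s \<longleftrightarrow> x = ?\<sigma> s" for x s by metis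
  have "loc_preserving E (8 * d * K) (perm_op ?\<sigma>)"
    by (rule loc_preserving_perm_op[OF inv spreads_by_swaps[OF sparse] spreads_by_swaps_inv[OF sparse]])
  moreover have "app (perm_op ?\<sigma>) Wstate =
      (\<lambda>x. complex_of_real (1 / sqrt (real (card (UNIV :: 'v set)))) * qstate x)"
  proof -
    have "?\<sigma> {i} = I i" for i
      using swaps_colour_classes_singleton[of col K i] sparse col_lt unfolding Lc_def by simp
    then show ?thesis
      by (simp add: app_perm_op[OF inv] Wstate_def qstate_def app_vac sdag_def nstr_def \<rho>_eq)
  qed
  moreover have "app (perm_op ?\<sigma>) vac = vac"
    by (simp add: app_perm_op[OF inv] vac_def \<rho>_eq swaps_empty)
  ultimately show ?thesis by blast
qed

lemma exists_loc_preserving_map: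
  "\<exists>M. loc_preserving E (8 * d * (max_degree E ^ (4 * d) + 1)) M \<and>
    app M Wstate = (\<lambda>x. complex_of_real (1 / sqrt (real (card (UNIV :: 'v set)))) * qstate x) \<and>
    app M vac = vac"
proof -
  obtain col where "\<And>v. col v \<le> max_degree E ^ (4 * d)"
    "\<And>a b. a \<noteq> b \<Longrightarrow> near E (4 * d) a b \<Longrightarrow> col a \<noteq> col b"
    using greedy_coloring[of "near E (4 * d)" "max_degree E ^ (4 * d)"] near_sym[OF graph]
      card_punctured_ball_le[OF graph] by metis
  then show ?thesis using loc_preserving_swaps[of col "max_degree E ^ (4 * d) + 1"]
    by (simp add: less_Suc_eq_le)
qed

section \<open>Local decompositions\<close>

lemma app_qstate: "app Op qstate x = (\<Sum>i\<in>UNIV. Op x (I i))"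
proof -
  have "Op x y * (if y = I i then 1 else 0) = (if y = I i then Op x (I i) else 0)" for y i
    by simp
  then show ?thesis
    unfolding app_def qstate_def sum_distrib_left by (simp add: sum.swap[of _ UNIV])
qed

definition regions :: "nat \<Rightarrow> 'v set set" where
  "regions D = {X. X \<noteq> {} \<and> diam E X \<le> enat D}"

definition admissible :: "'v set \<Rightarrow> 'v qop \<Rightarrow> bool" where
  "admissible X h \<longleftrightarrow> supported_in h X \<and> app h qstate = (\<lambda>_. 0) \<and> app h vac = (\<lambda>_. 0)"

definition decomposable :: "nat \<Rightarrow> 'v qop \<Rightarrow> bool" where
  "decomposable D Op \<longleftrightarrow> (\<exists>h. (\<forall>X\<in>regions D. admissible X (h X)) \<and>
      Op = (\<lambda>x y. \<Sum>X\<in>regions D. h X x y))"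

lemma admissible_zero: "admissible X (\<lambda>x y. 0)"
  unfolding admissible_def by (simp add: supported_in_zero app_zero)

lemma admissible_add: "admissible X A \<Longrightarrow> admissible X B \<Longrightarrow> admissible X (\<lambda>x y. A x y + B x y)"
  unfolding admissible_def by (simp add: supported_in_add app_add)

lemma admissible_scale: "admissible X A \<Longrightarrow> admissible X (\<lambda>x y. a * A x y)"
  unfolding admissible_def by (simp add: supported_in_scale app_scale)

lemma decomposable_zero: "decomposable D (\<lambda>x y. 0)"
  unfolding decomposable_def by (intro exI[of _ "\<lambda>X x y. 0"]) (simp add: admissible_zero)

lemma decomposable_add:
  assumes "decomposable D A" "decomposable D B"
  shows "decomposable D (\<lambda>x y. A x y + B x y)"
proof -
  obtain f where "\<forall>X\<in>regions D. admissible X (f X)" "A = (\<lambda>x y. \<Sum>X\<in>regions D. f X x y)"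
    using assms(1) unfolding decomposable_def by blast
  moreover obtain g where "\<forall>X\<in>regions D. admissible X (g X)" "B = (\<lambda>x y. \<Sum>X\<in>regions D. g X x y)"
    using assms(2) unfolding decomposable_def by blast
  ultimately show ?thesis unfolding decomposable_def
    by (intro exI[of _ "\<lambda>X x y. f X x y + g X x y"]) (simp add: admissible_add sum.distrib)
qed

lemma decomposable_scale:
  assumes "decomposable D A"
  shows "decomposable D (\<lambda>x y. a * A x y)"
proof -
  obtain f where "\<forall>X\<in>regions D. admissible X (f X)" "A = (\<lambda>x y. \<Sum>X\<in>regions D. f X x y)"
    using assms unfolding decomposable_def by blast
  then show ?thesis unfolding decomposable_def
    by (intro exI[of _ "\<lambda>X x y. a * f X x y"]) (simp add: admissible_scale sum_distrib_left)
qed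

lemma decomposable_sum:
  "finite S \<Longrightarrow> (\<And>s. s \<in> S \<Longrightarrow> decomposable D (A s)) \<Longrightarrow> decomposable D (\<lambda>x y. \<Sum>s\<in>S. A s x y)"
  by (induction S rule: finite_induct) (simp_all add: decomposable_zero decomposable_add)

lemma decomposable_single:
  assumes "admissible X Op" "X \<noteq> {}" "pairwise_near E n X" "n + 1 \<le> D"
  shows "decomposable D Op"
proof -
  have "diam E X \<le> enat D"
    using diam_le_if_pairwise_near[OF assms(2,3)] assms(4) order_trans by fastforce
  then have X: "X \<in> regions D" using assms(2) unfolding regions_def by simp
  have "Op = (\<lambda>x y. \<Sum>Y\<in>regions D. if Y = X then Op x y else 0)"
    using X by (simp add: sum.delta')
  moreover have "admissible Y (\<lambda>x y. if Y = X then Op x y else 0)" for Y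
    using assms(1) admissible_zero by (cases "Y = X") simp_all
  ultimately show ?thesis unfolding decomposable_def
    by (intro exI[of _ "\<lambda>Y x y. if Y = X then Op x y else 0"]) blast
qed

lemma decomposable_weighted_differences:
  assumes "finite T" "(\<Sum>\<tau>\<in>T. w \<tau>) = 0"
    and "\<And>\<tau>. \<tau> \<in> T \<Longrightarrow> w \<tau> \<noteq> 0 \<Longrightarrow> decomposable D (\<lambda>x y. G \<tau> x y - G\<^sub>0 x y)"
  shows "decomposable D (\<lambda>x y. \<Sum>\<tau>\<in>T. w \<tau> * G \<tau> x y)"
proof -
  have "decomposable D (\<lambda>x y. w \<tau> * (G \<tau> x y - G\<^sub>0 x y))" if "\<tau> \<in> T" for \<tau>
    using assms(3)[OF that] decomposable_scale decomposable_zero by (cases "w \<tau> = 0") auto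
  then have "decomposable D (\<lambda>x y. \<Sum>\<tau>\<in>T. w \<tau> * (G \<tau> x y - G\<^sub>0 x y))"
    by (rule decomposable_sum[OF assms(1)])
  moreover have "(\<Sum>\<tau>\<in>T. w \<tau> * (G \<tau> x y - G\<^sub>0 x y)) = (\<Sum>\<tau>\<in>T. w \<tau> * G \<tau> x y)" for x y
    using assms(2) by (simp add: right_diff_distrib sum_subtractf flip: sum_distrib_right)
  ultimately show ?thesis by simp
qed

lemma app_local_transition_vac: "a \<noteq> {} \<Longrightarrow> app (local_transition Z a b) vac = (\<lambda>_. 0)"
  by (rule ext) (simp add: app_vac local_transition_def)

lemma app_local_transition_qstate:
  assumes "I l \<subseteq> Z"
  shows "app (local_transition Z (I l) b) qstate x = (if x = b then 1 else 0)"
proof -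
  have "local_transition Z (I l) b x (I m) = (if m = l then (if x = b then 1 else 0) else 0)" for m
  proof (cases "m = l")
    case False
    then have "I m \<inter> Z \<noteq> I l" using I_subset_imp_eq[of l m] by blast
    then show ?thesis using False unfolding local_transition_def by simp
  qed (use assms in \<open>auto simp: local_transition_def\<close>)
  then show ?thesis by (simp add: app_qstate)
qed

text \<open>The string with creations J and annihilations K maps the configuration I l, for l among
  its sources, to its target.\<close>

definition sources :: "'v set \<Rightarrow> 'v set \<Rightarrow> 'v set" where
  "sources J K = {l. K \<subseteq> I l \<and> J \<inter> (I l - K) = {}}"

fun target :: "'v set \<times> 'v set \<times> 'v \<Rightarrow> 'v set" where
  "target (J, K, l) = (I l - K) \<union> J"

fun string_transition :: "'v set \<times> 'v set \<times> 'v \<Rightarrow> 'v qop" where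
  "string_transition (J, K, l) = local_transition (I l \<union> J \<union> K) (I l) (target (J, K, l))"

definition string_remainder :: "'v set \<Rightarrow> 'v set \<Rightarrow> 'v qop" where
  "string_remainder J K =
    (\<lambda>x y. nstr J K x y - (\<Sum>l\<in>sources J K. string_transition (J, K, l) x y))"

definition erase :: "'v \<Rightarrow> 'v qop" where
  "erase l = local_transition (I l) (I l) {}"

lemma app_nstr_qstate:
  "app (nstr J K) qstate x = (\<Sum>l\<in>sources J K. if x = target (J, K, l) then 1 else 0)"
proof -
  have "nstr J K x (I m) = (if m \<in> sources J K then (if x = target (J, K, m) then 1 else 0) else 0)"
    for m unfolding nstr_def sources_def by auto
  then show ?thesis by (simp add: app_qstate sum.inter_filter[symmetric])
qed

lemma app_string_transition_qstate:
  "app (string_transition \<tau>) qstate x = (if x = target \<tau> then 1 else 0)"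
proof -
  obtain J K l where \<tau>: "\<tau> = (J, K, l)" by (cases \<tau>)
  have "I l \<subseteq> I l \<union> J \<union> K" by blast
  then show ?thesis unfolding \<tau> by (simp only: string_transition.simps app_local_transition_qstate)
qed

lemma app_string_transition_vac: "app (string_transition \<tau>) vac = (\<lambda>_. 0)"
  by (cases \<tau>) (simp del: target.simps add: app_local_transition_vac I_nonempty)

lemma supported_in_string_transition:
  "supported_in (string_transition (J, K, l)) (I l \<union> J \<union> K)"
  unfolding string_transition.simps target.simps by (rule supported_in_local_transition) blast

lemma app_string_remainder_qstate: "app (string_remainder J K) qstate = (\<lambda>_. 0)"
  unfolding string_remainder_def app_diff app_sum
  by (simp del: target.simps string_transition.simps
      add: app_nstr_qstate app_string_transition_qstate)

definition short_string :: "nat \<Rightarrow> 'v set \<Rightarrow> 'v set \<Rightarrow> bool" where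
  "short_string r J K \<longleftrightarrow> K \<noteq> {} \<and> pairwise_near E r (J \<union> K)"

lemma pairwise_near_string_transition_support:
  assumes "short_string r J K" "l \<in> sources J K"
  shows "pairwise_near E (r + 2 * d) (J \<union> K \<union> I l)"
proof -
  obtain k where "k \<in> K" using assms(1) unfolding short_string_def by blast
  moreover from this have "k \<in> I l" using assms(2) unfolding sources_def by blast
  ultimately show ?thesis using assms(1) pairwise_near_I unfolding short_string_def
    by (metis pairwise_near_Un[OF graph] Un_iff)
qed

lemma decomposable_string_remainder:
  assumes "short_string r J K" "2 * r + 4 * d + 1 \<le> D"
  shows "decomposable D (string_remainder J K)"
proof -
  obtain k where k: "k \<in> K" using assms(1) unfolding short_string_def by blast
  define \<X> where "\<X> = insert (J \<union> K) ((\<lambda>l. J \<union> K \<union> I l) ` sources J K)"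
  have "pairwise_near E (r + 2 * d) X \<and> k \<in> X" if "X \<in> \<X>" for X
    using that k assms(1) pairwise_near_string_transition_support[OF assms(1)]
      pairwise_near_mono[of E r "J \<union> K" "r + 2 * d"]
    unfolding \<X>_def short_string_def by auto
  then have near: "pairwise_near E (r + 2 * d + (r + 2 * d)) (\<Union>\<X>)"
    by (intro pairwise_near_centre[OF graph, of _ _ k]) (auto simp: pairwise_near_def)
  have "supported_in (nstr J K) (\<Union>\<X>)"
    by (rule supported_in_mono[OF supported_in_nstr]) (auto simp: \<X>_def)
  moreover have "supported_in (string_transition (J, K, l)) (\<Union>\<X>)" if "l \<in> sources J K" for l
    using that by (intro supported_in_mono[OF supported_in_string_transition]) (auto simp: \<X>_def)
  ultimately have "supported_in (string_remainder J K) (\<Union>\<X>)"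
    unfolding string_remainder_def by (intro supported_in_diff supported_in_sum) auto
  moreover have "app (string_remainder J K) vac = (\<lambda>_. 0)"
  proof -
    have "nstr J K x {} = 0" for x using assms(1) unfolding nstr_def short_string_def by auto
    then show ?thesis unfolding string_remainder_def app_diff app_sum app_string_transition_vac
      by (simp add: app_vac)
  qed
  ultimately have "admissible (\<Union>\<X>) (string_remainder J K)"
    unfolding admissible_def by (simp add: app_string_remainder_qstate)
  then show ?thesis
    using near assms(2) k by (intro decomposable_single) (auto simp: \<X>_def)
qed

lemma decomposable_string_transition_diff:
  assumes "short_string r J K" "l \<in> sources J K" "short_string r J' K'" "l' \<in> sources J' K'"
    and "target (J, K, l) = t" "target (J', K', l') = t" "t \<noteq> {}" "2 * r + 4 * d + 1 \<le> D"
  shows "decomposable D (\<lambda>x y. string_transition (J, K, l) x y - string_transition (J', K', l') x y)"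
proof -
  define X where "X = (J \<union> K \<union> I l) \<union> (J' \<union> K' \<union> I l')"
  obtain p where p: "p \<in> t" using assms(7) by blast
  then have "p \<in> J \<union> K \<union> I l" "p \<in> J' \<union> K' \<union> I l'" using assms(5,6) by auto
  then have near: "pairwise_near E (r + 2 * d + (r + 2 * d)) X"
    unfolding X_def using pairwise_near_string_transition_support assms(1-4)
    by (metis pairwise_near_Un[OF graph])
  have "supported_in (\<lambda>x y. string_transition (J, K, l) x y - string_transition (J', K', l') x y) X"
    unfolding X_def by (intro supported_in_diff supported_in_mono[OF supported_in_string_transition])
      auto
  then have "admissible X (\<lambda>x y. string_transition (J, K, l) x y - string_transition (J', K', l') x y)"
    unfolding admissible_def app_diff using assms(2,4,5,6)
    by (simp del: target.simps string_transition.simps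
        add: app_string_transition_qstate app_string_transition_vac)
  moreover have "X \<noteq> {}" using I_nonempty[of l] unfolding X_def by blast
  ultimately show ?thesis using near assms(8) by (intro decomposable_single) auto
qed

lemma decomposable_erase_diff_edge:
  assumes "E u l" "2 * d + 3 \<le> D"
  shows "decomposable D (\<lambda>x y. erase l x y - erase u x y)"
proof -
  have "near E (d + 1) a l" if "a \<in> I u" for a
    using near_trans[OF near_I[OF that] near_edge[of E u l, OF assms(1)]] .
  moreover have "near E (d + 1) a l" if "a \<in> I l" for a
    using near_mono[OF near_I[OF that]] by simp
  ultimately have near: "pairwise_near E (d + 1 + (d + 1)) (I l \<union> I u)"
    by (intro pairwise_near_centre[OF graph]) blast
  have "supported_in (\<lambda>x y. erase l x y - erase u x y) (I l \<union> I u)"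
    unfolding erase_def
    by (intro supported_in_diff supported_in_mono[OF supported_in_local_transition]) auto
  moreover have "app (erase v) qstate x = (if x = {} then 1 else 0)" for v x
    unfolding erase_def by (rule app_local_transition_qstate) simp
  ultimately have "admissible (I l \<union> I u) (\<lambda>x y. erase l x y - erase u x y)"
    unfolding admissible_def erase_def by (simp add: app_diff app_local_transition_vac I_nonempty)
  moreover have "I l \<union> I u \<noteq> {}" using I_nonempty[of l] by blast
  ultimately show ?thesis using assms(2) by (intro decomposable_single[OF _ _ near]) auto
qed

lemma decomposable_erase_diff:
  assumes "graph_connected E" "2 * d + 3 \<le> D"
  shows "decomposable D (\<lambda>x y. erase l x y - erase l\<^sub>0 x y)"
proof -
  obtain n where "(E ^^ n) l\<^sub>0 l"
    using assms(1) unfolding graph_connected_def gdist_def by (auto split: if_splits)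
  then show ?thesis
  proof (induction n arbitrary: l)
    case 0
    then show ?case using decomposable_zero by simp
  next
    case (Suc n)
    then obtain u where u: "(E ^^ n) l\<^sub>0 u" "E u l" by (meson relpowp_Suc_E)
    have "decomposable D (\<lambda>x y. (erase l x y - erase u x y) + (erase u x y - erase l\<^sub>0 x y))"
      by (rule decomposable_add[OF decomposable_erase_diff_edge[OF u(2) assms(2)] Suc.IH[OF u(1)]])
    then show ?case by simp
  qed
qed

lemma decomposable_same_target:
  fixes w :: "'v set \<times> 'v set \<times> 'v \<Rightarrow> complex"
  assumes conn: "graph_connected E" and D: "2 * r + 4 * d + 1 \<le> D" "2 * d + 3 \<le> D"
    and w: "\<And>J K l. w (J, K, l) \<noteq> 0 \<Longrightarrow> short_string r J K \<and> l \<in> sources J K"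
    and zero: "(\<Sum>\<tau>\<in>{\<tau>. target \<tau> = t}. w \<tau>) = 0"
  shows "decomposable D (\<lambda>x y. \<Sum>\<tau>\<in>{\<tau>. target \<tau> = t}. w \<tau> * string_transition \<tau> x y)"
proof (cases "t = {}")
  case True
  \<comment> \<open>a string emptying the configuration I l acts on it as erase l; these are compared along
    paths of the connected graph\<close>
  fix l\<^sub>0 :: 'v
  show ?thesis
  proof (rule decomposable_weighted_differences[OF finite zero, where G\<^sub>0 = "erase l\<^sub>0"])
    fix \<tau> assume "\<tau> \<in> {\<tau>. target \<tau> = t}" "w \<tau> \<noteq> 0"
    moreover obtain J K l where \<tau>: "\<tau> = (J, K, l)" by (cases \<tau>)
    ultimately have "K \<subseteq> I l" "(I l - K) \<union> J = {}" using w True unfolding sources_def by auto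
    then have "string_transition \<tau> = erase l" unfolding \<tau> erase_def by (simp add: Un_absorb2)
    then show "decomposable D (\<lambda>x y. string_transition \<tau> x y - erase l\<^sub>0 x y)"
      using decomposable_erase_diff[OF conn D(2)] by (simp only:)
  qed
next
  case False
  define \<tau>\<^sub>0 where "\<tau>\<^sub>0 = (SOME \<tau>. target \<tau> = t \<and> w \<tau> \<noteq> 0)"
  show ?thesis
  proof (rule decomposable_weighted_differences[OF finite zero, where G\<^sub>0 = "string_transition \<tau>\<^sub>0"])
    fix \<tau> assume \<tau>: "\<tau> \<in> {\<tau>. target \<tau> = t}" "w \<tau> \<noteq> 0"
    then have "\<exists>\<tau>. target \<tau> = t \<and> w \<tau> \<noteq> 0" by blast
    then have "target \<tau>\<^sub>0 = t \<and> w \<tau>\<^sub>0 \<noteq> 0" unfolding \<tau>\<^sub>0_def by (rule someI_ex)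
    then have \<tau>\<^sub>0: "target \<tau>\<^sub>0 = t" "w \<tau>\<^sub>0 \<noteq> 0" by blast+
    obtain J K l J' K' l' where eq: "\<tau> = (J, K, l)" "\<tau>\<^sub>0 = (J', K', l')" by (cases \<tau>, cases \<tau>\<^sub>0)
    have "short_string r J K" "l \<in> sources J K" "short_string r J' K'" "l' \<in> sources J' K'"
      using w \<tau>(2) \<tau>\<^sub>0(2) unfolding eq by blast+
    moreover have "target (J, K, l) = t" "target (J', K', l') = t" using \<tau>(1) \<tau>\<^sub>0(1) eq by auto
    ultimately show "decomposable D (\<lambda>x y. string_transition \<tau> x y - string_transition \<tau>\<^sub>0 x y)"
      unfolding eq by (rule decomposable_string_transition_diff[OF _ _ _ _ _ _ False D(1)])
  qed
qed

lemma decomposable_weighted_transitions: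
  fixes w :: "'v set \<times> 'v set \<times> 'v \<Rightarrow> complex"
  assumes conn: "graph_connected E" and D: "2 * r + 4 * d + 1 \<le> D" "2 * d + 3 \<le> D"
    and w: "\<And>J K l. w (J, K, l) \<noteq> 0 \<Longrightarrow> short_string r J K \<and> l \<in> sources J K"
    and q: "app (\<lambda>x y. \<Sum>\<tau>\<in>UNIV. w \<tau> * string_transition \<tau> x y) qstate = (\<lambda>_. 0)"
  shows "decomposable D (\<lambda>x y. \<Sum>\<tau>\<in>UNIV. w \<tau> * string_transition \<tau> x y)"
proof -
  have "(\<Sum>\<tau>\<in>{\<tau>. target \<tau> = t}. w \<tau>) = 0" for t
  proof -
    have "(\<Sum>\<tau>\<in>{\<tau>. target \<tau> = t}. w \<tau>) = (\<Sum>\<tau>\<in>UNIV. if target \<tau> = t then w \<tau> else 0)"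
      by (simp add: sum.inter_filter[symmetric])
    also have "\<dots> = (\<Sum>\<tau>\<in>UNIV. w \<tau> * (if t = target \<tau> then 1 else 0))"
      by (intro sum.cong) auto
    also have "\<dots> = app (\<lambda>x y. \<Sum>\<tau>\<in>UNIV. w \<tau> * string_transition \<tau> x y) qstate t"
      by (simp only: app_sum app_scale app_string_transition_qstate)
    finally show ?thesis using q by simp
  qed
  then have "decomposable D (\<lambda>x y. \<Sum>t\<in>UNIV. \<Sum>\<tau>\<in>{\<tau>. target \<tau> = t}. w \<tau> * string_transition \<tau> x y)"
    by (intro decomposable_sum decomposable_same_target[OF conn D w]) auto
  moreover have "(\<Sum>t\<in>UNIV. \<Sum>\<tau>\<in>{\<tau>. target \<tau> = t}. w \<tau> * string_transition \<tau> x y)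
      = (\<Sum>\<tau>\<in>UNIV. w \<tau> * string_transition \<tau> x y)" for x y
    using sum.group[of UNIV UNIV target "\<lambda>\<tau>. w \<tau> * string_transition \<tau> x y"] by simp
  ultimately show ?thesis by simp
qed

definition source_weights :: "('v set \<Rightarrow> 'v set \<Rightarrow> complex) \<Rightarrow> 'v set \<times> 'v set \<times> 'v \<Rightarrow> complex" where
  "source_weights e = (\<lambda>(J, K, l). if l \<in> sources J K then e J K else 0)"

lemma expansion_split:
  "(\<lambda>x y. \<Sum>J\<in>UNIV. \<Sum>K\<in>UNIV. e J K * nstr J K x y) =
    (\<lambda>x y. (\<Sum>J\<in>UNIV. \<Sum>K\<in>UNIV. e J K * string_remainder J K x y) +
      (\<Sum>\<tau>\<in>UNIV. source_weights e \<tau> * string_transition \<tau> x y))"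
proof (intro ext)
  fix x y
  have "(\<Sum>\<tau>\<in>UNIV. source_weights e \<tau> * string_transition \<tau> x y) =
      (\<Sum>J\<in>UNIV. \<Sum>K\<in>UNIV. e J K * (\<Sum>l\<in>sources J K. string_transition (J, K, l) x y))"
    unfolding sum_UNIV_triple[of "\<lambda>\<tau>. source_weights e \<tau> * string_transition \<tau> x y"]
    by (simp add: source_weights_def sum.inter_filter[symmetric] sum_distrib_left
        if_distrib[of "\<lambda>c. c * _"] del: string_transition.simps cong: if_cong)
  moreover have "e J K * nstr J K x y = e J K * string_remainder J K x y +
      e J K * (\<Sum>l\<in>sources J K. string_transition (J, K, l) x y)" for J K
    unfolding string_remainder_def by (simp add: right_diff_distrib)
  ultimately show "(\<Sum>J\<in>UNIV. \<Sum>K\<in>UNIV. e J K * nstr J K x y) =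
      (\<Sum>J\<in>UNIV. \<Sum>K\<in>UNIV. e J K * string_remainder J K x y) +
      (\<Sum>\<tau>\<in>UNIV. source_weights e \<tau> * string_transition \<tau> x y)"
    by (simp only: sum.distrib)
qed

lemma decomposable_remainders:
  assumes "\<And>J K. e J K \<noteq> 0 \<Longrightarrow> short_string r J K" "2 * r + 4 * d + 1 \<le> D"
  shows "decomposable D (\<lambda>x y. \<Sum>J\<in>UNIV. \<Sum>K\<in>UNIV. e J K * string_remainder J K x y)"
proof -
  have "decomposable D (\<lambda>x y. e J K * string_remainder J K x y)" for J K
  proof (cases "e J K = 0")
    case False
    then show ?thesis by (rule decomposable_scale[OF decomposable_string_remainder[OF assms]])
  qed (simp add: decomposable_zero)
  then have "decomposable D (\<lambda>x y. \<Sum>K\<in>UNIV. e J K * string_remainder J K x y)" for J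
    by (rule decomposable_sum[OF finite_UNIV])
  then show ?thesis by (rule decomposable_sum[OF finite_UNIV])
qed

text \<open>Subtracting from each string its action on the configurations I l leaves local terms
  killing qstate; the transitions that remain cancel, target by target, because Op kills
  qstate.\<close>

lemma decomposable_if_annihilates:
  assumes conn: "graph_connected E" and R: "0 < R" "2 * R + 4 * d \<le> D"
    and range: "range_le E Op R" and vac: "app Op vac = (\<lambda>_. 0)" and q: "app Op qstate = (\<lambda>_. 0)"
  shows "decomposable D Op"
proof -
  have D: "2 * (R - 1) + 4 * d + 1 \<le> D" "2 * d + 3 \<le> D" using R d_pos by linarith+
  obtain e where e: "Op = (\<lambda>x y. \<Sum>J\<in>UNIV. \<Sum>K\<in>UNIV. e J K * nstr J K x y)"
    "\<And>J K. e J K \<noteq> 0 \<Longrightarrow> string_range_le E J K R"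
    using range unfolding range_le_def by blast
  have "e J {} = 0" for J
    using expansion_at_vac[OF e(1)] vac app_vac[of Op J] by simp
  then have short: "short_string (R - 1) J K" if "e J K \<noteq> 0" for J K
    using that e(2) string_range_le_imp_pairwise_near unfolding short_string_def by blast
  define P where "P = (\<lambda>x y. \<Sum>J\<in>UNIV. \<Sum>K\<in>UNIV. e J K * string_remainder J K x y)"
  define T where "T = (\<lambda>x y. \<Sum>\<tau>\<in>UNIV. source_weights e \<tau> * string_transition \<tau> x y)"
  have split: "Op = (\<lambda>x y. P x y + T x y)"
    unfolding e(1) P_def T_def by (rule expansion_split)
  have "app P qstate = (\<lambda>_. 0)"
    unfolding P_def app_sum app_scale by (simp add: app_string_remainder_qstate)
  then have "app T qstate = (\<lambda>_. 0)"
    using q unfolding split app_add by (metis add_0)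
  then have "decomposable D T"
    unfolding T_def using short D conn
    by (intro decomposable_weighted_transitions[where r = "R - 1"])
      (auto simp: source_weights_def split: if_splits)
  moreover have "decomposable D P" unfolding P_def by (rule decomposable_remainders[OF short D(1)])
  ultimately show ?thesis unfolding split by (metis decomposable_add add.commute)
qed

lemma app_number_op_qstate: "app number_op qstate = (\<lambda>x. of_nat c * qstate x)"
proof
  fix x
  have "number_op x (I i) = of_nat c * (if x = I i then 1 else 0)" for i
    by (simp add: number_op_eq card_I)
  then have "app number_op qstate x = (\<Sum>i\<in>UNIV. of_nat c * (if x = I i then 1 else 0))"
    by (simp only: app_qstate)
  then show "app number_op qstate x = of_nat c * qstate x"
    by (simp only: qstate_def sum_distrib_left)
qed

lemma local_decomposition:
  assumes conn: "graph_connected E" and R: "0 < R" "2 * R + 4 * d \<le> D" and range: "range_le E H R"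
    and "proportional (app H vac) vac" "proportional (app H qstate) qstate"
  shows "\<exists>(\<Omega>::complex) (\<omega>::complex) (h :: 'v set \<Rightarrow> 'v qop).
    (\<forall>X. X \<noteq> {} \<and> diam E X \<le> enat D \<longrightarrow>
      supported_in (h X) X \<and> app (h X) qstate = (\<lambda>_. 0) \<and> app (h X) vac = (\<lambda>_. 0)) \<and>
    H = (\<lambda>x y. \<Omega> * idop x y + \<omega> * (\<Sum>i\<in>UNIV. mmul (sdag i) (sann i) x y)
      + (\<Sum>X\<in>{X. X \<noteq> {} \<and> diam E X \<le> enat D}. h X x y))"
proof -
  obtain a b where vac: "app H vac = (\<lambda>x. a * vac x)" and q: "app H qstate = (\<lambda>x. b * qstate x)"
    using assms(5,6) unfolding proportional_def by blast
  define \<omega> where "\<omega> = (b - a) / of_nat c"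
  define H' where "H' = (\<lambda>x y. H x y - a * idop x y - \<omega> * number_op x y)"
  have "range_le E H' R"
    using range range_le_idop[OF R(1)] range_le_number_op[OF R(1)]
    unfolding H'_def range_le_iff_expandable by (intro expandable_diff expandable_scale)
  moreover have "app H' vac = (\<lambda>_. 0)"
    using vac unfolding H'_def app_diff app_scale app_idop app_number_op_vac by simp
  moreover have "app H' qstate = (\<lambda>_. 0)"
  proof -
    have "\<omega> * of_nat c = b - a" unfolding \<omega>_def using c_gt_1 by simp
    then show ?thesis unfolding H'_def app_diff app_scale app_idop q app_number_op_qstate
      by (auto simp: algebra_simps)
  qed
  ultimately have "decomposable D H'" by (rule decomposable_if_annihilates[OF conn R])
  then obtain h where "\<forall>X\<in>regions D. admissible X (h X)" "H' = (\<lambda>x y. \<Sum>X\<in>regions D. h X x y)"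
    unfolding decomposable_def by blast
  moreover from this(2) have "H = (\<lambda>x y. a * idop x y + \<omega> * number_op x y + (\<Sum>X\<in>regions D. h X x y))"
    unfolding H'_def by (simp add: fun_eq_iff algebra_simps)
  ultimately show ?thesis unfolding regions_def admissible_def number_op_def by blast
qed

end

theorem proposition7:
  fixes E :: "'v::finite \<Rightarrow> 'v \<Rightarrow> bool"
    and \<Delta> c d :: nat
    and I :: "'v \<Rightarrow> 'v set"
  assumes graph: "simple_graph E"
    and Delta: "\<Delta> = max_degree E"
    and c_gt: "c > 1"
    and card_I: "\<forall>i. card (I i) = c"
    and near_I: "\<forall>i. \<forall>j\<in>I i. gdist E j i \<le> enat d"
    and inj_I: "inj I"
  defines "N \<equiv> card (UNIV :: 'v set)"
    and "Qd \<equiv> (\<lambda>x y. \<Sum>i\<in>UNIV. nstr (I i) {} x y)"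
    and "B \<equiv> 8 * d * (\<Delta> ^ (4 * d) + 1)"
  shows "(\<exists>M \<delta>. \<delta> \<le> B \<and> loc_preserving E \<delta> M \<and>
            app M Wstate = (\<lambda>x. complex_of_real (1 / sqrt (real N)) * app Qd vac x) \<and>
            app M vac = vac)
       \<and> (graph_connected E \<longrightarrow>
            (\<forall>R H. 0 < R \<and> N > \<Delta> ^ (4 * (R + B)) + 1 \<and> range_le E H R \<and>
                proportional (app H vac) vac \<and>
                proportional (app H (app Qd vac)) (app Qd vac) \<longrightarrow>
              (\<exists>(\<Omega>::complex) (\<omega>::complex) (h :: 'v set \<Rightarrow> 'v qop).
                 (\<forall>X. X \<noteq> {} \<and> diam E X \<le> enat (2 * R + 3 * B) \<longrightarrow>
                    supported_in (h X) X \<and> app (h X) (app Qd vac) = (\<lambda>_. 0) \<and>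
                    app (h X) vac = (\<lambda>_. 0)) \<and>
                 H = (\<lambda>x y. \<Omega> * idop x y
                        + \<omega> * (\<Sum>i\<in>UNIV. mmul (sdag i) (sann i) x y)
                        + (\<Sum>X\<in>{X. X \<noteq> {} \<and> diam E X \<le> enat (2 * R + 3 * B)}. h X x y)))))"
proof -
  have near_d: "near E d j i" if "j \<in> I i" for i j
    using near_I that by (simp flip: gdist_le_iff_near)
  interpret cluster_family E I c d
    by (rule cluster_family.intro[OF graph c_gt _ near_d inj_I]) (simp add: card_I)
  have Qd_vac: "app Qd vac = qstate"
  proof
    fix x
    show "app Qd vac x = qstate x" unfolding app_vac Qd_def qstate_def nstr_def by simp
  qed
  have D: "2 * R + 4 * d \<le> 2 * R + 3 * B" for R unfolding B_def by simp
  show ?thesis unfolding Qd_vac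
    using exists_loc_preserving_map local_decomposition[OF _ _ D]
    unfolding B_def N_def Delta by blast
qed

end
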